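(* Let $\Gamma$ be a discrete group, $X$ a $\Gamma$-boundary and $x\in X_0^0$. Then $C^*_{\lambda_{\Gamma/\Gamma_x^0}\times\mathcal P_x}(\Gamma,X)$ is simple.
   Context: A $\Gamma$-boundary is a compact Hausdorff space with a minimal and strongly proximal $\Gamma$-action by homeomorphisms. $\Gamma_x^0=\{g: g\text{ fixes pointwise an open neighborhood of }x\}$, and $X_0^0$ is the set of continuity points of $x\mapsto\Gamma_x^0$ into the space of subgroups with the Chabauty topology (induced from $\{0,1\}^\Gamma$). $\lambda_{\Gamma/\Gamma_x^0}$ is the quasi-regular representation on $\ell^2(\Gamma/\Gamma_x^0)$, and $\mathcal P_x\colon C(X)\to B(\ell^2(\Gamma/\Gamma_x^0))$ is the multiplication representation by $\mathcal P_x(f)(g\Gamma_x^0)=f(gx)$. $C^*_{\lambda_{\Gamma/\Gamma_x^0}\times\mathcal P_x}(\Gamma,X)$ is the closed linear span of $\{\mathcal P_x(f)\lambda_{\Gamma/\Gamma_x^0}(g):f\in C(X),g\in\Gamma\}$. *)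

theory Defs
  imports "HOL-Probability.Probability"
begin

text \<open>The discrete group Gamma is a type of class group_add (written additively,
not assumed commutative); X is a compact Hausdorff space (a t2_space type whose
universe is compact); act is a left action by homeomorphisms.\<close>

definition group_action :: "('g::group_add \<Rightarrow> 'x::topological_space \<Rightarrow> 'x) \<Rightarrow> bool" where
  "group_action act \<longleftrightarrow>
     (\<forall>y. act 0 y = y) \<and> (\<forall>g h y. act (g + h) y = act g (act h y)) \<and>
     (\<forall>g. continuous_on UNIV (act g))"

definition minimal_action :: "('g::group_add \<Rightarrow> 'x::topological_space \<Rightarrow> 'x) \<Rightarrow> bool" where
  "minimal_action act \<longleftrightarrow> (\<forall>y. closure (range (\<lambda>g. act g y)) = UNIV)"

text \<open>Strong proximality: for every Borel probability measure mu on X, the weak*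
closure of the orbit of mu contains a Dirac measure delta_y.\<close>
definition strongly_proximal :: "('g::group_add \<Rightarrow> 'x::topological_space \<Rightarrow> 'x) \<Rightarrow> bool" where
  "strongly_proximal act \<longleftrightarrow>
     (\<forall>M::'x measure. prob_space M \<and> sets M = sets borel \<longrightarrow>
        (\<exists>y. \<forall>F. finite F \<and> (\<forall>f\<in>F. continuous_on UNIV (f :: 'x \<Rightarrow> real)) \<longrightarrow>
              (\<forall>\<epsilon>>0. \<exists>g. \<forall>f\<in>F. \<bar>(\<integral>z. f z \<partial>(distr M borel (act g))) - f y\<bar> < \<epsilon>)))"

definition gamma_boundary :: "('g::group_add \<Rightarrow> 'x::t2_space \<Rightarrow> 'x) \<Rightarrow> bool" where
  "gamma_boundary act \<longleftrightarrow> compact (UNIV :: 'x set) \<and> group_action act \<and>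
     minimal_action act \<and> strongly_proximal act"

definition Gamma0 :: "('g::group_add \<Rightarrow> 'x::topological_space \<Rightarrow> 'x) \<Rightarrow> 'x \<Rightarrow> 'g set" where
  "Gamma0 act x = {g. \<exists>U. open U \<and> x \<in> U \<and> (\<forall>y\<in>U. act g y = y)}"

text \<open>Continuity of x |-> Gamma_x^0 into {0,1}^Gamma with the product (Chabauty)
topology: every coordinate is locally constant at x.\<close>
definition X00 :: "('g::group_add \<Rightarrow> 'x::topological_space \<Rightarrow> 'x) \<Rightarrow> 'x set" where
  "X00 act = {x. \<forall>g. \<exists>U. open U \<and> x \<in> U \<and>
                  (\<forall>y\<in>U. (g \<in> Gamma0 act y \<longleftrightarrow> g \<in> Gamma0 act x))}"

definition lcoset :: "'g::group_add \<Rightarrow> 'g set \<Rightarrow> 'g set" where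
  "lcoset g H = (\<lambda>h. g + h) ` H"

definition cosets :: "'g::group_add set \<Rightarrow> 'g set set" where
  "cosets H = range (\<lambda>g. lcoset g H)"

text \<open>Vectors of ell^2(Q) are functions on 'a (here 'a = 'g set) vanishing off Q.\<close>
definition l2 :: "'a set \<Rightarrow> ('a \<Rightarrow> complex) set" where
  "l2 Q = {\<xi>. (\<forall>c. c \<notin> Q \<longrightarrow> \<xi> c = 0) \<and> (\<lambda>c. (norm (\<xi> c))\<^sup>2) summable_on Q}"

definition l2norm :: "'a set \<Rightarrow> ('a \<Rightarrow> complex) \<Rightarrow> real" where
  "l2norm Q \<xi> = sqrt (\<Sum>\<^sub>\<infinity>c\<in>Q. (norm (\<xi> c))\<^sup>2)"

type_synonym 'a op = "('a \<Rightarrow> complex) \<Rightarrow> ('a \<Rightarrow> complex)"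

text \<open>Operators are represented extensionally: they vanish outside ell^2(Q).\<close>
definition bounded_op :: "'a set \<Rightarrow> 'a op \<Rightarrow> bool" where
  "bounded_op Q T \<longleftrightarrow>
     (\<forall>\<xi>. \<xi> \<notin> l2 Q \<longrightarrow> T \<xi> = (\<lambda>_. 0)) \<and> (\<forall>\<xi>\<in>l2 Q. T \<xi> \<in> l2 Q) \<and>
     (\<forall>\<xi>\<in>l2 Q. \<forall>\<eta>\<in>l2 Q. \<forall>a. T (\<lambda>c. a * \<xi> c + \<eta> c) = (\<lambda>c. a * T \<xi> c + T \<eta> c)) \<and>
     (\<exists>K. \<forall>\<xi>\<in>l2 Q. l2norm Q (T \<xi>) \<le> K * l2norm Q \<xi>)"

definition opnorm :: "'a set \<Rightarrow> 'a op \<Rightarrow> real" where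
  "opnorm Q T = Sup {l2norm Q (T \<xi>) | \<xi>. \<xi> \<in> l2 Q \<and> l2norm Q \<xi> \<le> 1}"

definition op_diff :: "'a op \<Rightarrow> 'a op \<Rightarrow> 'a op" where
  "op_diff T S = (\<lambda>\<xi> c. T \<xi> c - S \<xi> c)"

definition zero_op :: "'a op" where
  "zero_op = (\<lambda>\<xi> c. 0)"

definition quasi_regular :: "'g::group_add set \<Rightarrow> 'g \<Rightarrow> 'g set op" where
  "quasi_regular H g \<xi> =
     (if \<xi> \<in> l2 (cosets H) then (\<lambda>c. \<xi> ((\<lambda>k. - g + k) ` c)) else (\<lambda>_. 0))"

definition mult_rep :: "('g::group_add \<Rightarrow> 'x \<Rightarrow> 'x) \<Rightarrow> 'x \<Rightarrow> 'g set \<Rightarrow> ('x \<Rightarrow> complex) \<Rightarrow> 'g set op" where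
  "mult_rep act x H f \<xi> =
     (if \<xi> \<in> l2 (cosets H)
      then (\<lambda>c. if c \<in> cosets H then f (act (SOME k. c = lcoset k H) x) * \<xi> c else 0)
      else (\<lambda>_. 0))"

definition cspan :: "'a op set \<Rightarrow> 'a op set" where
  "cspan S = {T. \<exists>n (a :: nat \<Rightarrow> complex) T'. (\<forall>i<n. T' i \<in> S) \<and>
                   T = (\<lambda>\<xi> c. \<Sum>i<n. a i * T' i \<xi> c)}"

text \<open>C*_{lambda x P_x}(Gamma, X): the norm-closed linear span of P_x(f) lambda(g).\<close>
definition crossed_alg :: "('g::group_add \<Rightarrow> 'x::topological_space \<Rightarrow> 'x) \<Rightarrow> 'x \<Rightarrow> 'g set op set" where
  "crossed_alg act x =
     (let H = Gamma0 act x; Q = cosets H;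
          G = {(\<lambda>\<xi>. mult_rep act x H f (quasi_regular H g \<xi>)) | f g. continuous_on UNIV f}
      in {T. bounded_op Q T \<and> (\<forall>\<epsilon>>0. \<exists>S\<in>cspan G. opnorm Q (op_diff T S) < \<epsilon>)})"

definition closed_ideal :: "'a set \<Rightarrow> 'a op set \<Rightarrow> 'a op set \<Rightarrow> bool" where
  "closed_ideal Q A J \<longleftrightarrow> J \<subseteq> A \<and> zero_op \<in> J \<and>
     (\<forall>a\<in>J. \<forall>b\<in>J. (\<lambda>\<xi> c. a \<xi> c + b \<xi> c) \<in> J) \<and>
     (\<forall>a\<in>J. \<forall>z. (\<lambda>\<xi> c. z * a \<xi> c) \<in> J) \<and>
     (\<forall>a\<in>A. \<forall>j\<in>J. a \<circ> j \<in> J \<and> j \<circ> a \<in> J) \<and>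
     (\<forall>T\<in>A. (\<forall>\<epsilon>>0. \<exists>j\<in>J. opnorm Q (op_diff T j) < \<epsilon>) \<longrightarrow> T \<in> J)"

definition simple_cstar :: "'a set \<Rightarrow> 'a op set \<Rightarrow> bool" where
  "simple_cstar Q A \<longleftrightarrow> A \<noteq> {zero_op} \<and>
     (\<forall>J. closed_ideal Q A J \<longrightarrow> J = {zero_op} \<or> J = A)"

end

theory Submission
  imports Defs
begin

(* Let J be a nonzero closed ideal. Translating a nonzero matrix entry, J contains an operator a
   with a nonzero vacuum entry a (delta H) H. Approximate a by S = sum_i alpha_i P(f_i) lambda(g_i).
   The vacuum entry of S is F(x), where F collects the terms with g_i in Gamma_x^0, so F(x) is far
   from 0. As x is a continuity point of y |-> Gamma_y^0, there is a small open W near x such that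
   each g_i^-1 either fixes W pointwise (when g_i is in Gamma_x^0) or moves W off itself.
   Compressing by cut-offs supported in W kills the off-diagonal terms of S and inverts F, so J
   contains an element within 1/2 of P(psi), with psi = 1 on an open set. By minimality and
   compactness finitely many translates of that set cover X; averaging the translated
   compressions against a partition of unity by squares gives an element of J within 1/2 of the
   identity, and a Neumann series shows that J is everything. *)

section \<open>Vectors and bounded operators on \<open>\<ell>\<^sup>2(Q)\<close>\<close>

lemma l2_zero_outside: "\<xi> \<in> l2 Q \<Longrightarrow> c \<notin> Q \<Longrightarrow> \<xi> c = 0"
  by (auto simp: l2_def)

lemma l2_summable: "\<xi> \<in> l2 Q \<Longrightarrow> (\<lambda>c. (cmod (\<xi> c))\<^sup>2) summable_on Q"
  by (auto simp: l2_def)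

lemma zero_in_l2 [simp]: "(\<lambda>_. 0) \<in> l2 Q"
  by (auto simp: l2_def)

lemma l2_dominated:
  assumes "\<xi> \<in> l2 Q" "\<And>c. cmod (\<zeta> c) \<le> B * cmod (\<xi> c)"
  shows "\<zeta> \<in> l2 Q"
proof -
  have "(cmod (\<zeta> c))\<^sup>2 \<le> B\<^sup>2 * (cmod (\<xi> c))\<^sup>2" for c
  proof -
    have "(cmod (\<zeta> c))\<^sup>2 \<le> (B * cmod (\<xi> c))\<^sup>2"
      using assms(2)[of c] by (intro power_mono) auto
    then show ?thesis by (simp add: power_mult_distrib)
  qed
  then have "(\<lambda>c. (cmod (\<zeta> c))\<^sup>2) summable_on Q"
    by (rule summable_on_comparison_test[OF summable_on_cmult_right[OF l2_summable[OF assms(1)]]])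
       auto
  moreover have "\<zeta> c = 0" if "c \<notin> Q" for c
    using assms(2)[of c] l2_zero_outside[OF assms(1) that] by simp
  ultimately show ?thesis by (auto simp: l2_def)
qed

lemma l2_add:
  assumes "\<xi> \<in> l2 Q" "\<eta> \<in> l2 Q"
  shows "(\<lambda>c. \<xi> c + \<eta> c) \<in> l2 Q"
proof -
  have bound: "(cmod (\<xi> c + \<eta> c))\<^sup>2 \<le> 2 * (cmod (\<xi> c))\<^sup>2 + 2 * (cmod (\<eta> c))\<^sup>2" for c
  proof -
    have "(cmod (\<xi> c + \<eta> c))\<^sup>2 \<le> (cmod (\<xi> c) + cmod (\<eta> c))\<^sup>2"
      by (intro power_mono norm_triangle_ineq) auto
    also have "\<dots> = 2 * (cmod (\<xi> c))\<^sup>2 + 2 * (cmod (\<eta> c))\<^sup>2 - (cmod (\<xi> c) - cmod (\<eta> c))\<^sup>2"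
      by (simp add: power2_eq_square algebra_simps)
    also have "\<dots> \<le> 2 * (cmod (\<xi> c))\<^sup>2 + 2 * (cmod (\<eta> c))\<^sup>2"
      by simp
    finally show ?thesis .
  qed
  have "(\<lambda>c. (cmod (\<xi> c + \<eta> c))\<^sup>2) summable_on Q"
  proof (rule summable_on_comparison_test)
    show "(\<lambda>c. 2 * (cmod (\<xi> c))\<^sup>2 + 2 * (cmod (\<eta> c))\<^sup>2) summable_on Q"
      by (intro summable_on_add summable_on_cmult_right l2_summable[OF assms(1)]
          l2_summable[OF assms(2)])
  qed (use bound in auto)
  then show ?thesis using assms by (auto simp: l2_def)
qed

lemma l2_scale: "\<xi> \<in> l2 Q \<Longrightarrow> (\<lambda>c. a * \<xi> c) \<in> l2 Q"
  by (rule l2_dominated[where B = "cmod a"]) (auto simp: norm_mult)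

lemma l2_mult_bounded: "\<xi> \<in> l2 Q \<Longrightarrow> (\<And>c. cmod (m c) \<le> B) \<Longrightarrow> (\<lambda>c. m c * \<xi> c) \<in> l2 Q"
  by (rule l2_dominated[where B = B]) (auto simp: norm_mult intro: mult_right_mono)

lemma l2_uminus: "\<xi> \<in> l2 Q \<Longrightarrow> (\<lambda>c. - \<xi> c) \<in> l2 Q"
  using l2_scale[of \<xi> Q "-1"] by simp

lemma l2_diff: "\<xi> \<in> l2 Q \<Longrightarrow> \<eta> \<in> l2 Q \<Longrightarrow> (\<lambda>c. \<xi> c - \<eta> c) \<in> l2 Q"
  using l2_add[OF _ l2_uminus, of \<xi> Q \<eta>] by simp

lemma l2_sum: "finite I \<Longrightarrow> (\<And>i. i \<in> I \<Longrightarrow> f i \<in> l2 Q) \<Longrightarrow> (\<lambda>c. \<Sum>i\<in>I. f i c) \<in> l2 Q"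
  by (induction I rule: finite_induct) (auto intro: l2_add)

lemma l2norm_nonneg [simp]: "0 \<le> l2norm Q \<xi>"
  by (auto simp: l2norm_def intro!: infsum_nonneg)

lemma l2norm_square: "(l2norm Q \<xi>)\<^sup>2 = (\<Sum>\<^sub>\<infinity>c\<in>Q. (cmod (\<xi> c))\<^sup>2)"
  by (auto simp: l2norm_def intro!: infsum_nonneg)

lemma l2norm_zero [simp]: "l2norm Q (\<lambda>_. 0) = 0"
  by (simp add: l2norm_def)

lemma l2norm_le_if_square_le:
  assumes "(l2norm Q \<zeta>)\<^sup>2 \<le> r\<^sup>2" "0 \<le> r"
  shows "l2norm Q \<zeta> \<le> r"
  using assms by (meson l2norm_nonneg power2_le_imp_le)

lemma l2norm_dominated:
  assumes "\<xi> \<in> l2 Q" "\<zeta> \<in> l2 Q" "\<And>c. c \<in> Q \<Longrightarrow> cmod (\<zeta> c) \<le> B * cmod (\<xi> c)" "0 \<le> B"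
  shows "l2norm Q \<zeta> \<le> B * l2norm Q \<xi>"
proof (rule l2norm_le_if_square_le)
  have "(\<Sum>\<^sub>\<infinity>c\<in>Q. (cmod (\<zeta> c))\<^sup>2) \<le> (\<Sum>\<^sub>\<infinity>c\<in>Q. B\<^sup>2 * (cmod (\<xi> c))\<^sup>2)"
  proof (rule infsum_mono)
    show "(\<lambda>c. B\<^sup>2 * (cmod (\<xi> c))\<^sup>2) summable_on Q"
      by (rule summable_on_cmult_right[OF l2_summable[OF assms(1)]])
    show "(cmod (\<zeta> c))\<^sup>2 \<le> B\<^sup>2 * (cmod (\<xi> c))\<^sup>2" if "c \<in> Q" for c
      using assms(3)[OF that] by (metis norm_ge_zero power_mono power_mult_distrib)
  qed (rule l2_summable[OF assms(2)])
  also have "\<dots> = (B * l2norm Q \<xi>)\<^sup>2"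
    by (simp add: l2norm_square infsum_cmult_right l2_summable assms power_mult_distrib)
  finally show "(l2norm Q \<zeta>)\<^sup>2 \<le> (B * l2norm Q \<xi>)\<^sup>2"
    by (simp add: l2norm_square)
qed (use assms(4) in simp)

lemma l2norm_scale: "\<xi> \<in> l2 Q \<Longrightarrow> l2norm Q (\<lambda>c. a * \<xi> c) = cmod a * l2norm Q \<xi>"
  unfolding l2norm_def
  by (simp add: norm_mult power_mult_distrib infsum_cmult_right l2_summable real_sqrt_mult)

lemma l2norm_uminus: "l2norm Q (\<lambda>c. - \<xi> c) = l2norm Q \<xi>"
  by (simp add: l2norm_def)

lemma norm_le_l2norm:
  assumes "\<xi> \<in> l2 Q"
  shows "cmod (\<xi> c) \<le> l2norm Q \<xi>"
proof (cases "c \<in> Q")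
  case True
  have "(\<Sum>c\<in>{c}. (cmod (\<xi> c))\<^sup>2) \<le> (\<Sum>\<^sub>\<infinity>c\<in>Q. (cmod (\<xi> c))\<^sup>2)"
    using True by (intro finite_sum_le_infsum l2_summable assms) auto
  then have "(cmod (\<xi> c))\<^sup>2 \<le> (l2norm Q \<xi>)\<^sup>2"
    by (simp add: l2norm_square)
  then show ?thesis
    by (meson l2norm_nonneg power2_le_imp_le)
qed (simp add: l2_zero_outside[OF assms])

lemma l2norm_eq_0_imp: "\<xi> \<in> l2 Q \<Longrightarrow> l2norm Q \<xi> = 0 \<Longrightarrow> \<xi> = (\<lambda>_. 0)"
  using norm_le_l2norm[of \<xi> Q] by fastforce

lemma L2_set_le_l2norm:
  assumes "\<zeta> \<in> l2 Q" "finite F" "F \<subseteq> Q"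
  shows "L2_set (\<lambda>c. cmod (\<zeta> c)) F \<le> l2norm Q \<zeta>"
proof -
  have "(\<Sum>c\<in>F. (cmod (\<zeta> c))\<^sup>2) \<le> (\<Sum>\<^sub>\<infinity>c\<in>Q. (cmod (\<zeta> c))\<^sup>2)"
    using assms by (intro finite_sum_le_infsum l2_summable) auto
  then show ?thesis unfolding L2_set_def l2norm_def by simp
qed

lemma l2norm_triangle:
  assumes "\<xi> \<in> l2 Q" "\<eta> \<in> l2 Q"
  shows "l2norm Q (\<lambda>c. \<xi> c + \<eta> c) \<le> l2norm Q \<xi> + l2norm Q \<eta>"
proof (rule l2norm_le_if_square_le)
  have "(\<Sum>\<^sub>\<infinity>c\<in>Q. (cmod (\<xi> c + \<eta> c))\<^sup>2) \<le> (l2norm Q \<xi> + l2norm Q \<eta>)\<^sup>2"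
  proof (rule infsum_le_finite_sums)
    show "(\<lambda>c. (cmod (\<xi> c + \<eta> c))\<^sup>2) summable_on Q"
      by (intro l2_summable l2_add assms)
    fix F assume F: "finite F" "F \<subseteq> Q"
    have "L2_set (\<lambda>c. cmod (\<xi> c + \<eta> c)) F \<le> L2_set (\<lambda>c. cmod (\<xi> c) + cmod (\<eta> c)) F"
      by (rule L2_set_mono) (auto intro: norm_triangle_ineq)
    also have "\<dots> \<le> L2_set (\<lambda>c. cmod (\<xi> c)) F + L2_set (\<lambda>c. cmod (\<eta> c)) F"
      by (rule L2_set_triangle_ineq)
    also have "\<dots> \<le> l2norm Q \<xi> + l2norm Q \<eta>"
      using L2_set_le_l2norm[OF assms(1) F] L2_set_le_l2norm[OF assms(2) F] by simp
    finally have "(L2_set (\<lambda>c. cmod (\<xi> c + \<eta> c)) F)\<^sup>2 \<le> (l2norm Q \<xi> + l2norm Q \<eta>)\<^sup>2"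
      by (intro power_mono) auto
    then show "(\<Sum>c\<in>F. (cmod (\<xi> c + \<eta> c))\<^sup>2) \<le> (l2norm Q \<xi> + l2norm Q \<eta>)\<^sup>2"
      unfolding L2_set_def by (simp add: sum_nonneg)
  qed
  then show "(l2norm Q (\<lambda>c. \<xi> c + \<eta> c))\<^sup>2 \<le> (l2norm Q \<xi> + l2norm Q \<eta>)\<^sup>2"
    by (simp add: l2norm_square)
qed (simp add: add_nonneg_nonneg)

lemma bounded_opI:
  assumes "\<And>\<xi>. \<xi> \<notin> l2 Q \<Longrightarrow> T \<xi> = (\<lambda>_. 0)"
    and "\<And>\<xi>. \<xi> \<in> l2 Q \<Longrightarrow> T \<xi> \<in> l2 Q"
    and "\<And>\<xi> \<eta> a. \<xi> \<in> l2 Q \<Longrightarrow> \<eta> \<in> l2 Q \<Longrightarrow>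
           T (\<lambda>c. a * \<xi> c + \<eta> c) = (\<lambda>c. a * T \<xi> c + T \<eta> c)"
    and "\<And>\<xi>. \<xi> \<in> l2 Q \<Longrightarrow> l2norm Q (T \<xi>) \<le> K * l2norm Q \<xi>"
  shows "bounded_op Q T"
  using assms unfolding bounded_op_def by blast

lemma bounded_op_outside: "bounded_op Q T \<Longrightarrow> \<xi> \<notin> l2 Q \<Longrightarrow> T \<xi> = (\<lambda>_. 0)"
  by (auto simp: bounded_op_def)

lemma bounded_op_l2: "bounded_op Q T \<Longrightarrow> \<xi> \<in> l2 Q \<Longrightarrow> T \<xi> \<in> l2 Q"
  by (auto simp: bounded_op_def)

lemma bounded_op_linear:
  "bounded_op Q T \<Longrightarrow> \<xi> \<in> l2 Q \<Longrightarrow> \<eta> \<in> l2 Q \<Longrightarrow>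
   T (\<lambda>c. a * \<xi> c + \<eta> c) = (\<lambda>c. a * T \<xi> c + T \<eta> c)"
  by (auto simp: bounded_op_def)

lemma bounded_op_zero:
  assumes "bounded_op Q T"
  shows "T (\<lambda>_. 0) = (\<lambda>_. 0)"
proof
  fix c
  have "T (\<lambda>_. 0) c = T (\<lambda>_. 0) c + T (\<lambda>_. 0) c"
    using fun_cong[OF bounded_op_linear[OF assms zero_in_l2 zero_in_l2, of 1], of c] by simp
  then show "T (\<lambda>_. 0) c = 0" by simp
qed

lemma bounded_op_add:
  "bounded_op Q T \<Longrightarrow> \<xi> \<in> l2 Q \<Longrightarrow> \<eta> \<in> l2 Q \<Longrightarrow> T (\<lambda>c. \<xi> c + \<eta> c) = (\<lambda>c. T \<xi> c + T \<eta> c)"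
  using bounded_op_linear[of Q T \<xi> \<eta> 1] by simp

lemma bounded_op_scale: "bounded_op Q T \<Longrightarrow> \<xi> \<in> l2 Q \<Longrightarrow> T (\<lambda>c. a * \<xi> c) = (\<lambda>c. a * T \<xi> c)"
  using bounded_op_linear[of Q T \<xi> "\<lambda>_. 0" a] bounded_op_zero[of Q T] by simp

lemma bounded_op_diff:
  "bounded_op Q T \<Longrightarrow> \<xi> \<in> l2 Q \<Longrightarrow> \<eta> \<in> l2 Q \<Longrightarrow> T (\<lambda>c. \<xi> c - \<eta> c) = (\<lambda>c. T \<xi> c - T \<eta> c)"
  using bounded_op_linear[of Q T \<eta> \<xi> "-1"] by (simp add: algebra_simps)

lemma bounded_op_sum:
  assumes "bounded_op Q T" "finite I" "\<And>i. i \<in> I \<Longrightarrow> f i \<in> l2 Q"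
  shows "T (\<lambda>c. \<Sum>i\<in>I. f i c) = (\<lambda>c. \<Sum>i\<in>I. T (f i) c)"
  using assms(2,3)
proof (induction I rule: finite_induct)
  case empty
  then show ?case using bounded_op_zero[OF assms(1)] by simp
next
  case (insert i I)
  then show ?case
    using bounded_op_add[OF assms(1), of "f i" "\<lambda>c. \<Sum>i\<in>I. f i c"] by (simp add: l2_sum)
qed

lemma bounded_op_bound:
  assumes "bounded_op Q T"
  obtains K where "0 \<le> K" "\<And>\<xi>. \<xi> \<in> l2 Q \<Longrightarrow> l2norm Q (T \<xi>) \<le> K * l2norm Q \<xi>"
proof -
  obtain K where K: "\<And>\<xi>. \<xi> \<in> l2 Q \<Longrightarrow> l2norm Q (T \<xi>) \<le> K * l2norm Q \<xi>"
    using assms unfolding bounded_op_def by blast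
  have "l2norm Q (T \<xi>) \<le> max K 0 * l2norm Q \<xi>" if "\<xi> \<in> l2 Q" for \<xi>
    using K[OF that] mult_right_mono[of K "max K 0" "l2norm Q \<xi>"] by simp
  then show ?thesis using that[of "max K 0"] by simp
qed

lemma bdd_above_opnorm:
  assumes "bounded_op Q T"
  shows "bdd_above {l2norm Q (T \<xi>) | \<xi>. \<xi> \<in> l2 Q \<and> l2norm Q \<xi> \<le> 1}"
proof -
  obtain K where K: "0 \<le> K" "\<And>\<xi>. \<xi> \<in> l2 Q \<Longrightarrow> l2norm Q (T \<xi>) \<le> K * l2norm Q \<xi>"
    using bounded_op_bound[OF assms] by blast
  have "l2norm Q (T \<xi>) \<le> K" if "\<xi> \<in> l2 Q" "l2norm Q \<xi> \<le> 1" for \<xi>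
    using K(2)[OF that(1)] mult_left_mono[OF that(2) K(1)] by simp
  then show ?thesis by (intro bdd_aboveI[where M = K]) blast
qed

lemma opnorm_leI:
  assumes "\<And>\<xi>. \<xi> \<in> l2 Q \<Longrightarrow> l2norm Q (T \<xi>) \<le> M * l2norm Q \<xi>" "0 \<le> M"
  shows "opnorm Q T \<le> M"
  unfolding opnorm_def
proof (rule cSup_least)
  show "{l2norm Q (T \<xi>) |\<xi>. \<xi> \<in> l2 Q \<and> l2norm Q \<xi> \<le> 1} \<noteq> {}"
    using zero_in_l2 l2norm_zero by fastforce
  fix r assume "r \<in> {l2norm Q (T \<xi>) |\<xi>. \<xi> \<in> l2 Q \<and> l2norm Q \<xi> \<le> 1}"
  then obtain \<xi> where "r = l2norm Q (T \<xi>)" "\<xi> \<in> l2 Q" "l2norm Q \<xi> \<le> 1" by blast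
  then show "r \<le> M"
    using assms(1)[of \<xi>] mult_left_mono[of "l2norm Q \<xi>" 1 M] assms(2) by simp
qed

lemma l2norm_apply_le_opnorm:
  assumes T: "bounded_op Q T" and \<xi>: "\<xi> \<in> l2 Q"
  shows "l2norm Q (T \<xi>) \<le> opnorm Q T * l2norm Q \<xi>"
proof (cases "l2norm Q \<xi> = 0")
  case True
  then show ?thesis using l2norm_eq_0_imp[OF \<xi>] bounded_op_zero[OF T] by simp
next
  case False
  define r where "r = l2norm Q \<xi>"
  have r: "r > 0" using False l2norm_nonneg[of Q \<xi>] r_def by linarith
  define \<eta> where "\<eta> = (\<lambda>c. complex_of_real (1 / r) * \<xi> c)"
  have \<eta>: "\<eta> \<in> l2 Q"
    unfolding \<eta>_def by (rule l2_scale[OF \<xi>])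
  have "l2norm Q \<eta> = 1"
    using r l2norm_scale[OF \<xi>, of "complex_of_real (1 / r)"] by (simp add: \<eta>_def r_def norm_divide)
  have "T \<eta> = (\<lambda>c. complex_of_real (1 / r) * T \<xi> c)"
    unfolding \<eta>_def by (rule bounded_op_scale[OF T \<xi>])
  then have "l2norm Q (T \<eta>) = l2norm Q (T \<xi>) / r"
    using r l2norm_scale[OF bounded_op_l2[OF T \<xi>], of "complex_of_real (1 / r)"]
    by (simp add: norm_divide)
  moreover have "l2norm Q (T \<eta>) \<le> opnorm Q T"
    unfolding opnorm_def using \<eta> \<open>l2norm Q \<eta> = 1\<close> by (intro cSup_upper bdd_above_opnorm[OF T]) auto
  ultimately show ?thesis using r by (simp add: r_def divide_le_eq mult.commute)
qed

lemma opnorm_nonneg: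
  assumes "bounded_op Q T"
  shows "0 \<le> opnorm Q T"
proof -
  have "(\<lambda>_. 0) \<in> l2 Q \<and> l2norm Q (\<lambda>_. 0) \<le> 1" by simp
  then have "l2norm Q (T (\<lambda>_. 0)) \<in> {l2norm Q (T \<xi>) |\<xi>. \<xi> \<in> l2 Q \<and> l2norm Q \<xi> \<le> 1}"
    by blast
  then have "l2norm Q (T (\<lambda>_. 0)) \<le> opnorm Q T"
    unfolding opnorm_def by (rule cSup_upper[OF _ bdd_above_opnorm[OF assms]])
  then show ?thesis by (rule order.trans[OF l2norm_nonneg])
qed

lemma norm_apply_le_opnorm:
  "bounded_op Q T \<Longrightarrow> \<xi> \<in> l2 Q \<Longrightarrow> cmod (T \<xi> c) \<le> opnorm Q T * l2norm Q \<xi>"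
  using norm_le_l2norm[OF bounded_op_l2] l2norm_apply_le_opnorm by (rule order.trans)

lemma l2norm_comp_le:
  assumes S: "bounded_op Q S" and T: "bounded_op Q T" and \<xi>: "\<xi> \<in> l2 Q"
  shows "l2norm Q (S (T \<xi>)) \<le> opnorm Q S * opnorm Q T * l2norm Q \<xi>"
proof -
  have "l2norm Q (S (T \<xi>)) \<le> opnorm Q S * l2norm Q (T \<xi>)"
    by (rule l2norm_apply_le_opnorm[OF S bounded_op_l2[OF T \<xi>]])
  also have "\<dots> \<le> opnorm Q S * (opnorm Q T * l2norm Q \<xi>)"
    by (intro mult_left_mono l2norm_apply_le_opnorm opnorm_nonneg S T \<xi>)
  finally show ?thesis by (simp add: mult.assoc)
qed

lemma opnorm_comp_le:
  assumes "bounded_op Q S" "bounded_op Q T"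
  shows "opnorm Q (S \<circ> T) \<le> opnorm Q S * opnorm Q T"
  using l2norm_comp_le[OF assms] by (intro opnorm_leI mult_nonneg_nonneg opnorm_nonneg assms) auto

lemma bounded_op_apply_l2: "bounded_op Q T \<Longrightarrow> T \<xi> \<in> l2 Q"
  by (cases "\<xi> \<in> l2 Q") (auto simp: bounded_op_l2 bounded_op_outside)

lemma bounded_op_comp:
  assumes S: "bounded_op Q S" and T: "bounded_op Q T"
  shows "bounded_op Q (S \<circ> T)"
proof (rule bounded_opI[where K = "opnorm Q S * opnorm Q T"])
  fix \<xi> \<eta> a assume "\<xi> \<in> l2 Q" "\<eta> \<in> l2 Q"
  then show "(S \<circ> T) (\<lambda>c. a * \<xi> c + \<eta> c) = (\<lambda>c. a * (S \<circ> T) \<xi> c + (S \<circ> T) \<eta> c)"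
    by (simp add: bounded_op_linear[OF T] bounded_op_linear[OF S bounded_op_l2[OF T] bounded_op_l2[OF T]])
qed (auto simp: bounded_op_outside[OF T] bounded_op_zero[OF S] bounded_op_apply_l2[OF S]
       l2norm_comp_le[OF S T])

lemma opnorm_comp3_le:
  assumes "bounded_op Q A" "bounded_op Q D" "bounded_op Q B"
  shows "opnorm Q (A \<circ> D \<circ> B) \<le> opnorm Q A * opnorm Q D * opnorm Q B"
  using opnorm_comp_le[OF bounded_op_comp[OF assms(1,2)] assms(3)]
    mult_right_mono[OF opnorm_comp_le[OF assms(1,2)] opnorm_nonneg[OF assms(3)]]
  by linarith

lemma bounded_op_lincomb:
  assumes T: "bounded_op Q T" and S: "bounded_op Q S"
  shows "bounded_op Q (\<lambda>\<xi> c. a * T \<xi> c + S \<xi> c)"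
proof -
  obtain K1 where K1: "0 \<le> K1" "\<And>\<xi>. \<xi> \<in> l2 Q \<Longrightarrow> l2norm Q (T \<xi>) \<le> K1 * l2norm Q \<xi>"
    using bounded_op_bound[OF T] by blast
  obtain K2 where K2: "0 \<le> K2" "\<And>\<xi>. \<xi> \<in> l2 Q \<Longrightarrow> l2norm Q (S \<xi>) \<le> K2 * l2norm Q \<xi>"
    using bounded_op_bound[OF S] by blast
  show ?thesis
  proof (rule bounded_opI[where K = "cmod a * K1 + K2"])
    fix \<xi> \<eta> b assume \<xi>: "\<xi> \<in> l2 Q" and \<eta>: "\<eta> \<in> l2 Q"
    show "(\<lambda>c. a * T (\<lambda>c. b * \<xi> c + \<eta> c) c + S (\<lambda>c. b * \<xi> c + \<eta> c) c) =
          (\<lambda>c. b * (a * T \<xi> c + S \<xi> c) + (a * T \<eta> c + S \<eta> c))"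
      unfolding bounded_op_linear[OF T \<xi> \<eta>] bounded_op_linear[OF S \<xi> \<eta>]
      by (simp add: algebra_simps)
  next
    fix \<xi> assume \<xi>: "\<xi> \<in> l2 Q"
    have "l2norm Q (\<lambda>c. a * T \<xi> c + S \<xi> c) \<le> l2norm Q (\<lambda>c. a * T \<xi> c) + l2norm Q (S \<xi>)"
      by (intro l2norm_triangle l2_scale bounded_op_l2[OF T \<xi>] bounded_op_l2[OF S \<xi>])
    also have "\<dots> = cmod a * l2norm Q (T \<xi>) + l2norm Q (S \<xi>)"
      using l2norm_scale[OF bounded_op_l2[OF T \<xi>]] by simp
    also have "\<dots> \<le> (cmod a * K1 + K2) * l2norm Q \<xi>"
      using K1(2)[OF \<xi>] K2(2)[OF \<xi>]
      by (simp add: distrib_right add_mono mult_left_mono mult.assoc)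
    finally show "l2norm Q (\<lambda>c. a * T \<xi> c + S \<xi> c) \<le> (cmod a * K1 + K2) * l2norm Q \<xi>" .
  next
    fix \<xi> assume "\<xi> \<notin> l2 Q"
    then show "(\<lambda>c. a * T \<xi> c + S \<xi> c) = (\<lambda>_. 0)"
      by (simp add: bounded_op_outside[OF T] bounded_op_outside[OF S])
  next
    fix \<xi> assume "\<xi> \<in> l2 Q"
    then show "(\<lambda>c. a * T \<xi> c + S \<xi> c) \<in> l2 Q"
      using l2_add[OF l2_scale[OF bounded_op_l2[OF T]] bounded_op_l2[OF S]] by blast
  qed
qed

lemma bounded_op_op_diff:
  assumes "bounded_op Q T" "bounded_op Q S"
  shows "bounded_op Q (op_diff T S)"
  using bounded_op_lincomb[OF assms(2,1), of "-1"] by (simp add: op_diff_def)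

lemma norm_entry_diff_le_opnorm:
  assumes "bounded_op Q T" "bounded_op Q S" "\<xi> \<in> l2 Q" "l2norm Q \<xi> \<le> 1"
  shows "cmod (T \<xi> c - S \<xi> c) \<le> opnorm Q (op_diff T S)"
proof -
  have "cmod (op_diff T S \<xi> c) \<le> opnorm Q (op_diff T S) * l2norm Q \<xi>"
    by (rule norm_apply_le_opnorm[OF bounded_op_op_diff[OF assms(1,2)] assms(3)])
  also have "\<dots> \<le> opnorm Q (op_diff T S)"
    using mult_left_mono[OF assms(4) opnorm_nonneg[OF bounded_op_op_diff[OF assms(1,2)]]] by simp
  finally show ?thesis by (simp add: op_diff_def)
qed

lemma op_diff_sandwich:
  assumes "bounded_op Q A" "bounded_op Q T" "bounded_op Q S"
  shows "op_diff (A \<circ> T \<circ> B) (A \<circ> S \<circ> B) = A \<circ> op_diff T S \<circ> B"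
  by (simp add: fun_eq_iff op_diff_def bounded_op_diff[OF assms(1) bounded_op_apply_l2[OF assms(2)]
      bounded_op_apply_l2[OF assms(3)]])

lemma bounded_op_zero_op: "bounded_op Q zero_op"
  by (rule bounded_opI[where K = 0]) (auto simp: zero_op_def)

lemma bounded_op_sum_ops:
  fixes n :: nat
  assumes "\<And>i. i < n \<Longrightarrow> bounded_op Q (T i)"
  shows "bounded_op Q (\<lambda>\<xi> c. \<Sum>i<n. a i * T i \<xi> c)"
  using assms
proof (induction n)
  case 0
  then show ?case using bounded_op_zero_op by (simp add: zero_op_def)
next
  case (Suc n)
  then show ?case
    using bounded_op_lincomb[of Q "T n" "\<lambda>\<xi> c. \<Sum>i<n. a i * T i \<xi> c" "a n"]
    by (simp add: add.commute)
qed

lemma opnorm_op_diff_self: "opnorm Q (op_diff T T) = 0"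
proof -
  have "op_diff T T = zero_op" by (simp add: op_diff_def zero_op_def)
  moreover have "opnorm Q zero_op \<le> 0"
    by (rule opnorm_leI) (auto simp: zero_op_def)
  ultimately show ?thesis using opnorm_nonneg[OF bounded_op_zero_op, of Q] by simp
qed

definition id_op :: "'a set \<Rightarrow> 'a op" where
  "id_op Q \<xi> = (if \<xi> \<in> l2 Q then \<xi> else (\<lambda>_. 0))"

lemma comp_id_op: "bounded_op Q T \<Longrightarrow> T \<circ> id_op Q = T"
  by (auto simp: fun_eq_iff id_op_def bounded_op_outside bounded_op_zero)

text \<open>If \<open>y\<close> approximates the identity with error \<open>R\<close>, then \<open>j + y - j y\<close> approximates it
  with error \<open>(1 - j) R\<close>: the step of the Neumann series argument.\<close>
lemma op_diff_id_op_Neumann_step: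
  assumes j: "bounded_op Q j" and y: "bounded_op Q y"
  shows "op_diff (id_op Q) (\<lambda>\<xi> c. j \<xi> c + y \<xi> c - (j \<circ> y) \<xi> c) =
         op_diff (id_op Q) j \<circ> op_diff (id_op Q) y"
proof
  fix \<xi>
  show "op_diff (id_op Q) (\<lambda>\<xi> c. j \<xi> c + y \<xi> c - (j \<circ> y) \<xi> c) \<xi> =
        (op_diff (id_op Q) j \<circ> op_diff (id_op Q) y) \<xi>"
  proof (cases "\<xi> \<in> l2 Q")
    case True
    have y\<xi>: "y \<xi> \<in> l2 Q" by (rule bounded_op_l2[OF y True])
    have "j (\<lambda>c. \<xi> c - y \<xi> c) = (\<lambda>c. j \<xi> c - j (y \<xi>) c)"
      by (rule bounded_op_diff[OF j True y\<xi>])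
    then show ?thesis
      using True l2_diff[OF True y\<xi>] by (simp add: op_diff_def id_op_def fun_eq_iff)
  next
    case False
    then show ?thesis
      by (simp add: op_diff_def id_op_def bounded_op_outside[OF j] bounded_op_outside[OF y]
          bounded_op_zero[OF j])
  qed
qed

lemma closed_ideal_sum:
  assumes J: "closed_ideal Q A J" and S: "finite S" and T: "\<And>s. s \<in> S \<Longrightarrow> T s \<in> J"
  shows "(\<lambda>\<xi> e. \<Sum>s\<in>S. T s \<xi> e) \<in> J"
  using S T
proof (induction S rule: finite_induct)
  case empty
  have "zero_op \<in> J" using J unfolding closed_ideal_def by blast
  then show ?case by (simp add: zero_op_def)
next
  case (insert s S)
  have "\<And>a b. a \<in> J \<Longrightarrow> b \<in> J \<Longrightarrow> (\<lambda>\<xi> c. a \<xi> c + b \<xi> c) \<in> J"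
    using J unfolding closed_ideal_def by blast
  from this[of "T s" "\<lambda>\<xi> e. \<Sum>s\<in>S. T s \<xi> e"] show ?case
    using insert by simp
qed

lemma closed_ideal_Neumann_iterate:
  assumes J: "closed_ideal Q A J" and bounded: "\<And>T. T \<in> A \<Longrightarrow> bounded_op Q T"
    and id_in: "id_op Q \<in> A" and j: "j \<in> J"
  shows "\<exists>y\<in>J. opnorm Q (op_diff (id_op Q) y) \<le> opnorm Q (op_diff (id_op Q) j) ^ Suc n"
proof (induction n)
  case 0
  then show ?case using j by auto
next
  case (Suc n)
  have JA: "J \<subseteq> A"
    and add: "\<And>a b. a \<in> J \<Longrightarrow> b \<in> J \<Longrightarrow> (\<lambda>\<xi> c. a \<xi> c + b \<xi> c) \<in> J"
    and scale: "\<And>a z. a \<in> J \<Longrightarrow> (\<lambda>\<xi> c. z * a \<xi> c) \<in> J"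
    and mult: "\<And>a b. a \<in> A \<Longrightarrow> b \<in> J \<Longrightarrow> a \<circ> b \<in> J \<and> b \<circ> a \<in> J"
    using J unfolding closed_ideal_def by blast+
  obtain y where y: "y \<in> J" "opnorm Q (op_diff (id_op Q) y) \<le> opnorm Q (op_diff (id_op Q) j) ^ Suc n"
    using Suc by blast
  have bounded_id: "bounded_op Q (id_op Q)" and bounded_j: "bounded_op Q j" and bounded_y: "bounded_op Q y"
    using bounded id_in j y(1) JA by auto
  have "(\<lambda>\<xi> c. (-1) * (j \<circ> y) \<xi> c) \<in> J" using mult j y JA scale by blast
  from add[OF add[OF j y(1)] this]
  have "(\<lambda>\<xi> c. j \<xi> c + y \<xi> c - (j \<circ> y) \<xi> c) \<in> J" by simp
  moreover have "opnorm Q (op_diff (id_op Q) (\<lambda>\<xi> c. j \<xi> c + y \<xi> c - (j \<circ> y) \<xi> c))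
      \<le> opnorm Q (op_diff (id_op Q) j) ^ Suc (Suc n)"
    unfolding op_diff_id_op_Neumann_step[OF bounded_j bounded_y]
    using opnorm_comp_le[OF bounded_op_op_diff[OF bounded_id bounded_j]
        bounded_op_op_diff[OF bounded_id bounded_y]]
      mult_left_mono[OF y(2) opnorm_nonneg[OF bounded_op_op_diff[OF bounded_id bounded_j]]]
    by simp
  ultimately show ?case by blast
qed

lemma closed_ideal_eq_if_near_id_op:
  assumes J: "closed_ideal Q A J" and bounded: "\<And>T. T \<in> A \<Longrightarrow> bounded_op Q T"
    and id_in: "id_op Q \<in> A" and j: "j \<in> J" and near: "opnorm Q (op_diff (id_op Q) j) < 1"
  shows "J = A"
proof -
  have JA: "J \<subseteq> A"
    and mult: "\<And>a b. a \<in> A \<Longrightarrow> b \<in> J \<Longrightarrow> a \<circ> b \<in> J \<and> b \<circ> a \<in> J"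
    and closed: "\<And>T. T \<in> A \<Longrightarrow> \<forall>\<epsilon>>0. \<exists>j\<in>J. opnorm Q (op_diff T j) < \<epsilon> \<Longrightarrow> T \<in> J"
    using J unfolding closed_ideal_def by blast+
  define r where "r = opnorm Q (op_diff (id_op Q) j)"
  have "bounded_op Q (op_diff (id_op Q) j)"
    using bounded id_in j JA by (intro bounded_op_op_diff) auto
  then have r: "0 \<le> r" "r < 1"
    using near opnorm_nonneg by (auto simp: r_def)
  have "\<exists>y\<in>J. opnorm Q (op_diff (id_op Q) y) < \<epsilon>" if \<epsilon>: "\<epsilon> > 0" for \<epsilon>
  proof -
    obtain n where "r ^ n < \<epsilon>" using real_arch_pow_inv[OF \<epsilon> r(2)] by blast
    moreover have "r ^ Suc n \<le> r ^ n" by (rule power_decreasing) (use r in auto)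
    ultimately show ?thesis
      using closed_ideal_Neumann_iterate[OF J bounded id_in j, of n] unfolding r_def[symmetric]
      by (meson le_less_trans)
  qed
  then have "id_op Q \<in> J" by (intro closed[OF id_in]) blast
  then have "T \<in> J" if "T \<in> A" for T
    using mult[OF that] comp_id_op[OF bounded[OF that]] by metis
  then show ?thesis using JA by blast
qed

definition delta :: "'a \<Rightarrow> 'a \<Rightarrow> complex" where
  "delta d = (\<lambda>e. if e = d then 1 else 0)"

lemma delta_in_l2:
  assumes "d \<in> Q"
  shows "delta d \<in> l2 Q"
proof -
  have "(\<lambda>e. (cmod (delta d e))\<^sup>2) summable_on Q \<longleftrightarrow> (\<lambda>e. (cmod (delta d e))\<^sup>2) summable_on {d}"
    by (rule summable_on_cong_neutral) (auto simp: delta_def assms)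
  then show ?thesis using assms by (auto simp: l2_def delta_def)
qed

lemma l2norm_delta:
  assumes "d \<in> Q"
  shows "l2norm Q (delta d) = 1"
proof -
  have "(\<Sum>\<^sub>\<infinity>e\<in>Q. (cmod (delta d e))\<^sup>2) = (\<Sum>\<^sub>\<infinity>e\<in>{d}. (cmod (delta d e))\<^sup>2)"
    by (rule infsum_cong_neutral) (auto simp: delta_def assms)
  then show ?thesis by (simp add: l2norm_def delta_def)
qed

lemma l2_tail_small:
  assumes \<xi>: "\<xi> \<in> l2 Q" and \<delta>: "\<delta> > 0"
  obtains F where "finite F" "F \<subseteq> Q" "l2norm Q (\<lambda>e. if e \<in> F then 0 else \<xi> e) \<le> \<delta>"
proof -
  define f where "f = (\<lambda>e. (cmod (\<xi> e))\<^sup>2)"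
  have "f summable_on Q" unfolding f_def by (rule l2_summable[OF \<xi>])
  then obtain F where F: "finite F" "F \<subseteq> Q" "dist (sum f F) (infsum f Q) \<le> \<delta>\<^sup>2"
    using infsum_finite_approximation[of f Q "\<delta>\<^sup>2"] \<delta> by auto
  define \<rho> where "\<rho> e = (if e \<in> F then 0 else \<xi> e)" for e
  define g where "g e = (if e \<in> F then f e else 0)" for e
  have \<rho>: "\<rho> \<in> l2 Q"
    unfolding \<rho>_def by (rule l2_dominated[OF \<xi>, where B = 1]) auto
  have g_F: "g summable_on Q \<longleftrightarrow> g summable_on F" "infsum g Q = infsum g F"
    using F(2) by (intro summable_on_cong_neutral infsum_cong_neutral; auto simp: g_def)+
  have "infsum f Q = infsum (\<lambda>e. g e + (cmod (\<rho> e))\<^sup>2) Q"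
    by (rule infsum_cong) (auto simp: f_def g_def \<rho>_def)
  also have "\<dots> = infsum g Q + (l2norm Q \<rho>)\<^sup>2"
    using F(1) g_F by (simp add: infsum_add l2_summable[OF \<rho>] l2norm_square)
  also have "infsum g Q = sum f F"
    using F(1) g_F by (simp add: g_def)
  finally have "(l2norm Q \<rho>)\<^sup>2 \<le> \<delta>\<^sup>2"
    using F(3) by (simp add: dist_real_def)
  then have "l2norm Q \<rho> \<le> \<delta>"
    using \<delta> by (intro l2norm_le_if_square_le) auto
  then show ?thesis using that[OF F(1,2)] unfolding \<rho>_def by blast
qed

text \<open>Finitely supported vectors are dense, and on them \<open>T\<close> is determined by its columns
  \<open>T (delta d)\<close>.\<close>
lemma bounded_op_delta_entry_nonzero:
  assumes T: "bounded_op Q T" and nz: "T \<xi> c \<noteq> 0"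
  shows "\<exists>d\<in>Q. T (delta d) c \<noteq> 0"
proof (rule ccontr)
  assume "\<not> (\<exists>d\<in>Q. T (delta d) c \<noteq> 0)"
  then have vanish: "T (delta d) c = 0" if "d \<in> Q" for d
    using that by blast
  have \<xi>: "\<xi> \<in> l2 Q"
    using nz bounded_op_outside[OF T] by force
  define \<delta> where "\<delta> = cmod (T \<xi> c) / (opnorm Q T + 1)"
  have \<delta>: "\<delta> > 0" using nz opnorm_nonneg[OF T] by (simp add: \<delta>_def)
  obtain F where F: "finite F" "F \<subseteq> Q" and tail: "l2norm Q (\<lambda>e. if e \<in> F then 0 else \<xi> e) \<le> \<delta>"
    using l2_tail_small[OF \<xi> \<delta>] by blast
  define \<rho> where "\<rho> = (\<lambda>e. if e \<in> F then 0 else \<xi> e)"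
  have \<rho>: "\<rho> \<in> l2 Q"
    unfolding \<rho>_def by (rule l2_dominated[OF \<xi>, where B = 1]) auto
  have head: "(\<lambda>e. \<Sum>d\<in>F. \<xi> d * delta d e) \<in> l2 Q"
    using F by (intro l2_sum l2_scale delta_in_l2) auto
  have "\<xi> = (\<lambda>e. (\<Sum>d\<in>F. \<xi> d * delta d e) + \<rho> e)"
    using F(1) by (auto simp: \<rho>_def delta_def fun_eq_iff if_distrib sum.delta' cong: if_cong)
  then have "T \<xi> c = (\<Sum>d\<in>F. T (\<lambda>e. \<xi> d * delta d e) c) + T \<rho> c"
    using bounded_op_add[OF T head \<rho>] bounded_op_sum[OF T F(1)] F
    by (simp add: l2_scale delta_in_l2 subset_iff)
  also have "(\<Sum>d\<in>F. T (\<lambda>e. \<xi> d * delta d e) c) = 0"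
    using F by (intro sum.neutral) (simp add: bounded_op_scale[OF T delta_in_l2] vanish subset_iff)
  finally have "cmod (T \<xi> c) = cmod (T \<rho> c)" by simp
  also have "\<dots> \<le> opnorm Q T * l2norm Q \<rho>"
    by (rule norm_apply_le_opnorm[OF T \<rho>])
  also have "\<dots> \<le> opnorm Q T * \<delta>"
    using tail[folded \<rho>_def] by (intro mult_left_mono opnorm_nonneg T)
  also have "\<dots> < cmod (T \<xi> c)"
    using nz opnorm_nonneg[OF T] by (simp add: \<delta>_def field_simps)
  finally show False by simp
qed

lemma abs_le_one_if_sum_squares_le_one:
  fixes w :: "'s \<Rightarrow> real"
  assumes "finite S" "s \<in> S" "(\<Sum>s\<in>S. (w s)\<^sup>2) \<le> 1"
  shows "\<bar>w s\<bar> \<le> 1"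
proof -
  have "(w s)\<^sup>2 \<le> 1\<^sup>2"
    using member_le_sum[of s S "\<lambda>s. (w s)\<^sup>2"] assms by simp
  then show ?thesis using abs_le_square_iff[of "w s" 1] by simp
qed

lemma norm_weighted_sum_square_le:
  fixes w :: "'s \<Rightarrow> real" and z :: "'s \<Rightarrow> complex"
  assumes "(\<Sum>s\<in>S. (w s)\<^sup>2) \<le> 1"
  shows "(cmod (\<Sum>s\<in>S. of_real (w s) * z s))\<^sup>2 \<le> (\<Sum>s\<in>S. (cmod (z s))\<^sup>2)"
proof -
  have "cmod (\<Sum>s\<in>S. of_real (w s) * z s) \<le> (\<Sum>s\<in>S. cmod (of_real (w s) * z s))"
    by (rule norm_sum)
  also have "\<dots> = (\<Sum>s\<in>S. \<bar>w s\<bar> * \<bar>cmod (z s)\<bar>)"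
    by (simp add: norm_mult)
  also have "\<dots> \<le> L2_set w S * L2_set (\<lambda>s. cmod (z s)) S"
    by (rule L2_set_mult_ineq)
  also have "\<dots> \<le> 1 * L2_set (\<lambda>s. cmod (z s)) S"
    by (rule mult_right_mono) (use assms in \<open>auto simp: L2_set_def intro!: sum_nonneg\<close>)
  finally have "(cmod (\<Sum>s\<in>S. of_real (w s) * z s))\<^sup>2 \<le> (L2_set (\<lambda>s. cmod (z s)) S)\<^sup>2"
    by (intro power_mono) auto
  then show ?thesis by (simp add: L2_set_def sum_nonneg)
qed

lemma summable_on_infsum_sum_finite:
  fixes f :: "'s \<Rightarrow> 'a \<Rightarrow> real"
  assumes "finite S" "\<And>s. s \<in> S \<Longrightarrow> f s summable_on Q"
  shows "(\<lambda>c. \<Sum>s\<in>S. f s c) summable_on Q \<and>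
         (\<Sum>\<^sub>\<infinity>c\<in>Q. \<Sum>s\<in>S. f s c) = (\<Sum>s\<in>S. \<Sum>\<^sub>\<infinity>c\<in>Q. f s c)"
  using assms
proof (induction S rule: finite_induct)
  case (insert s S)
  then have f: "f s summable_on Q" and IH: "(\<lambda>c. \<Sum>s\<in>S. f s c) summable_on Q"
      "(\<Sum>\<^sub>\<infinity>c\<in>Q. \<Sum>s\<in>S. f s c) = (\<Sum>s\<in>S. \<Sum>\<^sub>\<infinity>c\<in>Q. f s c)"
    by auto
  show ?case
    using insert(1,2) summable_on_add[OF f IH(1)] infsum_add[OF f IH(1)] IH(2) by simp
qed simp

lemma l2norm_weighted_row_square_le:
  fixes w :: "'s \<Rightarrow> 'a \<Rightarrow> real"
  assumes S: "finite S" and \<eta>: "\<And>s. s \<in> S \<Longrightarrow> \<eta> s \<in> l2 Q" and w: "\<And>c. (\<Sum>s\<in>S. (w s c)\<^sup>2) \<le> 1"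
  shows "(l2norm Q (\<lambda>c. \<Sum>s\<in>S. of_real (w s c) * \<eta> s c))\<^sup>2 \<le> (\<Sum>s\<in>S. (l2norm Q (\<eta> s))\<^sup>2)"
proof -
  have "(\<lambda>c. \<Sum>s\<in>S. of_real (w s c) * \<eta> s c) \<in> l2 Q"
    using abs_le_one_if_sum_squares_le_one[OF S _ w] \<eta>
    by (intro l2_sum[OF S] l2_mult_bounded[where B = 1]) auto
  note sum = summable_on_infsum_sum_finite[OF S l2_summable[OF \<eta>]]
  have "(l2norm Q (\<lambda>c. \<Sum>s\<in>S. of_real (w s c) * \<eta> s c))\<^sup>2 \<le> (\<Sum>\<^sub>\<infinity>c\<in>Q. \<Sum>s\<in>S. (cmod (\<eta> s c))\<^sup>2)"
    unfolding l2norm_square using sum norm_weighted_sum_square_le[OF w]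
    by (intro infsum_mono l2_summable[OF \<open>_ \<in> l2 Q\<close>]) auto
  also have "\<dots> = (\<Sum>s\<in>S. (l2norm Q (\<eta> s))\<^sup>2)"
    using sum by (simp add: l2norm_square)
  finally show ?thesis .
qed

lemma l2norm_weighted_column_square_le:
  fixes w :: "'s \<Rightarrow> 'a \<Rightarrow> real"
  assumes S: "finite S" and \<xi>: "\<xi> \<in> l2 Q" and w: "\<And>c. (\<Sum>s\<in>S. (w s c)\<^sup>2) \<le> 1"
  shows "(\<Sum>s\<in>S. (l2norm Q (\<lambda>d. of_real (w s d) * \<xi> d))\<^sup>2) \<le> (l2norm Q \<xi>)\<^sup>2"
proof -
  have \<zeta>: "(\<lambda>d. of_real (w s d) * \<xi> d) \<in> l2 Q" if "s \<in> S" for s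
    using abs_le_one_if_sum_squares_le_one[OF S that w] by (intro l2_mult_bounded[OF \<xi>, where B = 1]) auto
  note sum = summable_on_infsum_sum_finite[OF S l2_summable[OF \<zeta>]]
  have "(\<Sum>s\<in>S. (l2norm Q (\<lambda>d. of_real (w s d) * \<xi> d))\<^sup>2) =
      (\<Sum>\<^sub>\<infinity>c\<in>Q. \<Sum>s\<in>S. (cmod (of_real (w s c) * \<xi> c))\<^sup>2)"
    using sum by (simp add: l2norm_square)
  also have "\<dots> \<le> (\<Sum>\<^sub>\<infinity>c\<in>Q. (cmod (\<xi> c))\<^sup>2)"
  proof (rule infsum_mono)
    fix c
    have "(\<Sum>s\<in>S. (cmod (of_real (w s c) * \<xi> c))\<^sup>2) = (\<Sum>s\<in>S. (w s c)\<^sup>2) * (cmod (\<xi> c))\<^sup>2"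
      by (simp add: norm_mult power_mult_distrib sum_distrib_right)
    also have "\<dots> \<le> (cmod (\<xi> c))\<^sup>2"
      using mult_right_mono[OF w[of c], of "(cmod (\<xi> c))\<^sup>2"] by simp
    finally show "(\<Sum>s\<in>S. (cmod (of_real (w s c) * \<xi> c))\<^sup>2) \<le> (cmod (\<xi> c))\<^sup>2" .
  qed (use sum l2_summable[OF \<xi>] in auto)
  finally show ?thesis by (simp add: l2norm_square)
qed

lemma l2norm_weighted_sum_le:
  fixes w :: "'s \<Rightarrow> 'a \<Rightarrow> real" and E :: "'s \<Rightarrow> 'a op"
  assumes S: "finite S" and \<xi>: "\<xi> \<in> l2 Q" and M: "0 \<le> M"
    and E_l2: "\<And>s \<zeta>. s \<in> S \<Longrightarrow> \<zeta> \<in> l2 Q \<Longrightarrow> E s \<zeta> \<in> l2 Q"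
    and E_norm: "\<And>s \<zeta>. s \<in> S \<Longrightarrow> \<zeta> \<in> l2 Q \<Longrightarrow> l2norm Q (E s \<zeta>) \<le> M * l2norm Q \<zeta>"
    and w: "\<And>c. (\<Sum>s\<in>S. (w s c)\<^sup>2) \<le> 1"
  shows "l2norm Q (\<lambda>c. \<Sum>s\<in>S. of_real (w s c) * E s (\<lambda>d. of_real (w s d) * \<xi> d) c)
           \<le> M * l2norm Q \<xi>"
proof (rule l2norm_le_if_square_le)
  have \<zeta>: "(\<lambda>d. of_real (w s d) * \<xi> d) \<in> l2 Q" if "s \<in> S" for s
    using abs_le_one_if_sum_squares_le_one[OF S that w] by (intro l2_mult_bounded[OF \<xi>, where B = 1]) auto
  have "(l2norm Q (\<lambda>c. \<Sum>s\<in>S. of_real (w s c) * E s (\<lambda>d. of_real (w s d) * \<xi> d) c))\<^sup>2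
      \<le> (\<Sum>s\<in>S. (l2norm Q (E s (\<lambda>d. of_real (w s d) * \<xi> d)))\<^sup>2)"
    using E_l2 \<zeta> by (intro l2norm_weighted_row_square_le[OF S _ w]) auto
  also have "\<dots> \<le> (\<Sum>s\<in>S. M\<^sup>2 * (l2norm Q (\<lambda>d. of_real (w s d) * \<xi> d))\<^sup>2)"
    using E_norm \<zeta> M by (intro sum_mono) (auto simp: power_mult_distrib[symmetric] intro: power_mono)
  also have "\<dots> \<le> M\<^sup>2 * (l2norm Q \<xi>)\<^sup>2"
    using l2norm_weighted_column_square_le[OF S \<xi> w] by (simp add: sum_distrib_left[symmetric] mult_left_mono)
  finally show "(l2norm Q (\<lambda>c. \<Sum>s\<in>S. of_real (w s c) * E s (\<lambda>d. of_real (w s d) * \<xi> d) c))\<^sup>2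
      \<le> (M * l2norm Q \<xi>)\<^sup>2"
    by (simp add: power_mult_distrib)
qed (use M in simp)

section \<open>Bumps, cut-offs and partitions of unity\<close>

lemma continuous_on_compact_UNIV_bounded:
  fixes f :: "'x::topological_space \<Rightarrow> complex"
  assumes "compact (UNIV :: 'x set)" "continuous_on UNIV f"
  obtains B where "\<And>y. cmod (f y) \<le> B"
proof -
  have "bounded (range f)"
    by (intro compact_imp_bounded compact_continuous_image assms)
  then show ?thesis using that unfolding bounded_iff by blast
qed

lemma plateau_function:
  fixes W :: "'x::t2_space set"
  assumes cpt: "compact (UNIV :: 'x set)" and W: "open W" "W \<noteq> {}"
  obtains h :: "'x \<Rightarrow> real" and V where "continuous_on UNIV h" "\<And>y. 0 \<le> h y" "\<And>y. h y \<le> 1"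
    "\<And>y. y \<notin> W \<Longrightarrow> h y = 0" "open V" "V \<noteq> {}" "\<And>y. y \<in> V \<Longrightarrow> h y = 1"
proof -
  obtain z where z: "z \<in> W" using W(2) by blast
  have "normal_space (euclidean :: 'x topology)"
    using cpt hausdorff
    by (intro compact_Hausdorff_or_regular_imp_normal_space)
       (auto simp: compact_space_def Hausdorff_space_def disjnt_def)
  then obtain f :: "'x \<Rightarrow> real"
    where f: "continuous_map euclidean (top_of_set {0..1}) f" "f ` (- W) \<subseteq> {0}" "f ` {z} \<subseteq> {1}"
    using Urysohn_lemma[of euclidean "- W" "{z}" 0 1] W(1) z by (auto simp: closed_Compl disjnt_def)
  have f01: "f y \<in> {0..1}" for y
    using f(1) by (auto simp: continuous_map_in_subtopology)
  have fc: "continuous_on UNIV f"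
    using f(1) by (auto simp: continuous_map_in_subtopology)
  \<comment> \<open>doubling and truncating turns the bump into a plateau around \<open>z\<close>\<close>
  define h where "h y = min 1 (2 * f y)" for y
  show ?thesis
  proof (rule that[of h "{y. 1/2 < f y}"])
    show "continuous_on UNIV h"
      unfolding h_def by (intro continuous_intros fc)
    show "open {y. 1/2 < f y}"
      by (rule open_Collect_less[OF continuous_on_const fc])
    show "{y. 1/2 < f y} \<noteq> {}"
      using f(3) by (auto intro!: exI[of _ z])
  qed (use f01 f(2) in \<open>auto simp: h_def\<close>)
qed

lemma bounded_inverse_cutoff:
  fixes F :: "'x::topological_space \<Rightarrow> complex"
  assumes F: "continuous_on UNIV F" and \<beta>: "\<beta> > 0"
  obtains k where "continuous_on UNIV k" "\<And>y. cmod (k y) \<le> 1 / \<beta>"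
    "\<And>y. \<beta> < cmod (F y) \<Longrightarrow> k y * F y = 1"
proof
  define M where "M y = max ((cmod (F y))\<^sup>2) (\<beta>\<^sup>2)" for y
  have M: "0 < M y" for y
    using \<beta> by (simp add: M_def less_max_iff_disj)
  \<comment> \<open>\<open>k = conj F / max (|F|\<^sup>2, \<beta>\<^sup>2)\<close> agrees with \<open>1 / F\<close> where \<open>|F| \<ge> \<beta>\<close>\<close>
  show "continuous_on UNIV (\<lambda>y. cnj (F y) / of_real (M y))"
  proof (intro continuous_intros F)
    show "continuous_on UNIV M" unfolding M_def by (intro continuous_intros F)
  qed (use M in \<open>auto simp: less_le\<close>)
  show "cmod (cnj (F y) / of_real (M y)) \<le> 1 / \<beta>" for y
  proof -
    have "\<beta> * cmod (F y) \<le> M y"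
    proof (cases "\<beta> \<le> cmod (F y)")
      case True
      then show ?thesis
        using mult_right_mono[OF True, of "cmod (F y)"]
        by (simp add: M_def power2_eq_square le_max_iff_disj)
    next
      case False
      then show ?thesis
        using mult_left_mono[of "cmod (F y)" \<beta> \<beta>] \<beta> False
        by (simp add: M_def power2_eq_square le_max_iff_disj)
    qed
    then show ?thesis using M[of y] \<beta> by (simp add: norm_divide field_simps)
  qed
  show "cnj (F y) / of_real (M y) * F y = 1" if "\<beta> < cmod (F y)" for y
  proof -
    have "M y = (cmod (F y))\<^sup>2"
      using that \<beta> power_strict_mono[OF that, of 2] by (simp add: M_def)
    then have "of_real (M y) = F y * cnj (F y)"
      by (simp only: complex_norm_square)
    moreover have "F y \<noteq> 0" using that \<beta> by auto
    ultimately show ?thesis by (simp add: field_simps)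
  qed
qed

lemma square_partition_of_unity:
  fixes \<rho> :: "'s \<Rightarrow> 'x::topological_space \<Rightarrow> real"
  assumes S: "finite S" and cont: "\<And>s. continuous_on UNIV (\<rho> s)"
    and cover: "\<And>y. \<exists>s\<in>S. \<rho> s y \<noteq> 0"
  obtains u :: "'s \<Rightarrow> 'x \<Rightarrow> real" where "\<And>s. continuous_on UNIV (u s)" "\<And>y. (\<Sum>s\<in>S. (u s y)\<^sup>2) = 1"
    "\<And>s y. u s y \<noteq> 0 \<Longrightarrow> \<rho> s y \<noteq> 0"
proof -
  define \<sigma> where "\<sigma> y = (\<Sum>s\<in>S. (\<rho> s y)\<^sup>2)" for y
  define u where "u s y = \<rho> s y / sqrt (\<sigma> y)" for s y
  have \<sigma>: "0 < \<sigma> y" for y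
  proof -
    obtain s where "s \<in> S" "\<rho> s y \<noteq> 0" using cover by blast
    then have "0 < (\<rho> s y)\<^sup>2" "(\<rho> s y)\<^sup>2 \<le> \<sigma> y"
      unfolding \<sigma>_def by (auto intro: member_le_sum S)
    then show ?thesis by linarith
  qed
  have sum: "(\<Sum>s\<in>S. (u s y)\<^sup>2) = 1" for y
    using \<sigma>[of y] by (simp add: u_def power_divide sum_divide_distrib[symmetric] \<sigma>_def)
  show ?thesis
  proof (rule that[of u])
    show "continuous_on UNIV (u s)" for s
      unfolding u_def \<sigma>_def using \<sigma>
      by (intro continuous_intros cont) (auto simp: \<sigma>_def less_le)
  qed (use sum in \<open>auto simp: u_def\<close>)
qed

section \<open>Cosets of \<open>\<Gamma>\<^sub>x\<^sup>0\<close> and the generators \<open>P\<^sub>x(f) \<lambda>(g)\<close>\<close>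

locale pointed_action =
  fixes act :: "'g::group_add \<Rightarrow> 'x::t2_space \<Rightarrow> 'x" and x :: 'x
  assumes group_action: "group_action act"
begin

abbreviation H :: "'g set" where "H \<equiv> Gamma0 act x"
abbreviation Q :: "'g set set" where "Q \<equiv> cosets H"

lemma act_zero [simp]: "act 0 y = y"
  using group_action by (simp add: group_action_def)

lemma act_add: "act (g + h) y = act g (act h y)"
  using group_action by (simp add: group_action_def)

lemma continuous_on_act: "continuous_on UNIV (act g)"
  using group_action by (simp add: group_action_def)

lemma act_uminus_act [simp]: "act (- g) (act g y) = y"
  by (simp add: act_add[symmetric])

lemma open_vimage_act: "open U \<Longrightarrow> open (act g -` U)"
  using continuous_on_open_vimage[OF open_UNIV, of "act g"] continuous_on_act by auto

lemma in_Gamma0_if_fixes_open: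
  "open U \<Longrightarrow> y \<in> U \<Longrightarrow> (\<And>z. z \<in> U \<Longrightarrow> act g z = z) \<Longrightarrow> g \<in> Gamma0 act y"
  unfolding Gamma0_def by blast

lemma zero_in_Gamma0: "0 \<in> Gamma0 act y"
  by (rule in_Gamma0_if_fixes_open[of UNIV]) auto

lemma uminus_in_Gamma0:
  assumes "g \<in> Gamma0 act y"
  shows "- g \<in> Gamma0 act y"
proof -
  obtain U where U: "open U" "y \<in> U" "\<And>z. z \<in> U \<Longrightarrow> act g z = z"
    using assms unfolding Gamma0_def by auto
  show ?thesis
    by (rule in_Gamma0_if_fixes_open[OF U(1,2)]) (metis U(3) act_uminus_act)
qed

lemma uminus_in_Gamma0_iff [simp]: "- g \<in> Gamma0 act y \<longleftrightarrow> g \<in> Gamma0 act y"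
  using uminus_in_Gamma0[of g y] uminus_in_Gamma0[of "- g" y] by auto

lemma add_in_Gamma0:
  assumes "g \<in> Gamma0 act y" "h \<in> Gamma0 act y"
  shows "g + h \<in> Gamma0 act y"
proof -
  obtain U V where "open U" "y \<in> U" "\<And>z. z \<in> U \<Longrightarrow> act g z = z"
    "open V" "y \<in> V" "\<And>z. z \<in> V \<Longrightarrow> act h z = z"
    using assms unfolding Gamma0_def by auto
  then show ?thesis
    by (intro in_Gamma0_if_fixes_open[of "U \<inter> V"]) (auto simp: act_add)
qed

lemma Gamma0_fixes: "g \<in> Gamma0 act y \<Longrightarrow> act g y = y"
  unfolding Gamma0_def by auto

lemma Gamma0_conjugate: "g \<in> Gamma0 act (act k y) \<Longrightarrow> - k + g + k \<in> Gamma0 act y"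
proof -
  assume "g \<in> Gamma0 act (act k y)"
  then obtain U where U: "open U" "act k y \<in> U" "\<And>z. z \<in> U \<Longrightarrow> act g z = z"
    unfolding Gamma0_def by auto
  show ?thesis
    by (rule in_Gamma0_if_fixes_open[OF open_vimage_act[OF U(1)]]) (use U in \<open>auto simp: act_add\<close>)
qed

lemma lcoset_eq_iff: "lcoset k H = lcoset k' H \<longleftrightarrow> - k + k' \<in> H"
proof
  assume "lcoset k H = lcoset k' H"
  then have "k' + 0 \<in> lcoset k H"
    using zero_in_Gamma0[of x] unfolding lcoset_def by blast
  then obtain a where "a \<in> H" "k' = k + a" by (auto simp: lcoset_def)
  then show "- k + k' \<in> H" by (simp add: add.assoc[symmetric])
next
  assume h: "- k + k' \<in> H"
  then have h': "- k' + k \<in> H"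
    using uminus_in_Gamma0[OF h] by (simp add: minus_add)
  have "k + a \<in> lcoset k' H" if "a \<in> H" for a
    using add_in_Gamma0[OF h' that] unfolding lcoset_def
    by (intro image_eqI[of _ _ "- k' + k + a"]) (auto simp: add.assoc[symmetric])
  moreover have "k' + a \<in> lcoset k H" if "a \<in> H" for a
    using add_in_Gamma0[OF h that] unfolding lcoset_def
    by (intro image_eqI[of _ _ "- k + k' + a"]) (auto simp: add.assoc[symmetric])
  ultimately show "lcoset k H = lcoset k' H"
    unfolding lcoset_def by blast
qed

lemma H_in_Q: "H \<in> Q"
  unfolding cosets_def lcoset_def by (rule range_eqI[of _ _ 0]) simp

lemma mem_cosets_iff: "c \<in> Q \<longleftrightarrow> (\<exists>k. c = lcoset k H)"
  unfolding cosets_def by auto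

definition shift :: "'g \<Rightarrow> 'g set \<Rightarrow> 'g set" where
  "shift g c = (\<lambda>k. g + k) ` c"

lemma shift_zero [simp]: "shift 0 c = c"
  by (simp add: shift_def)

lemma shift_shift: "shift g (shift h c) = shift (g + h) c"
  by (simp add: shift_def image_image add.assoc)

lemma shift_uminus_shift [simp]: "shift (- g) (shift g c) = c"
  by (simp add: shift_shift)

lemma shift_shift_uminus [simp]: "shift g (shift (- g) c) = c"
  by (simp add: shift_shift)

lemma shift_lcoset: "shift g (lcoset k H) = lcoset (g + k) H"
  by (simp add: shift_def lcoset_def image_image add.assoc)

lemma lcoset_eq_shift: "lcoset k H = shift k H"
  by (simp add: shift_def lcoset_def)

lemma shift_in_Q_iff [simp]: "shift g c \<in> Q \<longleftrightarrow> c \<in> Q"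
  by (metis mem_cosets_iff shift_lcoset shift_uminus_shift)

lemma shift_eq_H_iff: "shift g H = H \<longleftrightarrow> g \<in> H"
  using lcoset_eq_iff[of g 0] by (simp add: lcoset_eq_shift[symmetric] lcoset_def)

lemma bij_betw_shift: "bij_betw (shift g) Q Q"
  by (rule bij_betw_byWitness[where f' = "shift (- g)"]) auto

definition coset_point :: "'g set \<Rightarrow> 'x" where
  "coset_point c = act (SOME k. c = lcoset k H) x"

lemma coset_point_lcoset: "coset_point (lcoset k H) = act k x"
proof -
  define k' where "k' = (SOME k'. lcoset k H = lcoset k' H)"
  have "lcoset k H = lcoset k' H" unfolding k'_def by (rule someI[of _ k]) simp
  then have fixed: "act (- k + k') x = x"
    by (intro Gamma0_fixes) (simp add: lcoset_eq_iff)
  have "act k' x = act (k + (- k + k')) x"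
    by (simp add: add.assoc[symmetric])
  also have "\<dots> = act k x"
    by (simp only: act_add[of k "- k + k'"] fixed)
  finally show ?thesis unfolding coset_point_def k'_def by simp
qed

lemma coset_point_H: "coset_point H = x"
  using coset_point_lcoset[of 0] by (simp add: lcoset_def)

lemma coset_point_shift: "c \<in> Q \<Longrightarrow> coset_point (shift g c) = act g (coset_point c)"
  by (auto simp: mem_cosets_iff shift_lcoset coset_point_lcoset act_add)

lemma shift_fixes_coset:
  assumes "c \<in> Q" "g \<in> Gamma0 act (coset_point c)"
  shows "shift g c = c"
proof -
  obtain k where k: "c = lcoset k H" using assms(1) by (auto simp: mem_cosets_iff)
  have "- k + - g + k \<in> H"
    using assms(2) k by (intro Gamma0_conjugate) (simp add: coset_point_lcoset)
  then show ?thesis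
    unfolding k shift_lcoset lcoset_eq_iff by (simp add: minus_add)
qed

lemma shift_l2: "\<xi> \<in> l2 Q \<Longrightarrow> (\<lambda>c. \<xi> (shift g c)) \<in> l2 Q"
  using summable_on_reindex_bij_betw[OF bij_betw_shift, of "\<lambda>c. (cmod (\<xi> c))\<^sup>2" g]
  by (auto simp: l2_def)

lemma l2norm_shift: "l2norm Q (\<lambda>c. \<xi> (shift g c)) = l2norm Q \<xi>"
  unfolding l2norm_def
  using infsum_reindex_bij_betw[OF bij_betw_shift, of "\<lambda>c. (cmod (\<xi> c))\<^sup>2" g] by simp

text \<open>With \<open>shift\<close> and \<open>coset_point\<close> the choice
  of coset representatives made by \<open>mult_rep\<close> never has to be looked at again.\<close>
definition gen_op :: "('x \<Rightarrow> complex) \<Rightarrow> 'g \<Rightarrow> 'g set op" where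
  "gen_op f g \<xi> = mult_rep act x H f (quasi_regular H g \<xi>)"

lemma gen_op_eq:
  "gen_op f g \<xi> = (if \<xi> \<in> l2 Q then (\<lambda>c. f (coset_point c) * \<xi> (shift (- g) c)) else (\<lambda>_. 0))"
proof -
  have "mult_rep act x H f \<eta> = (\<lambda>c. f (coset_point c) * \<eta> c)" if "\<eta> \<in> l2 Q" for \<eta>
    unfolding mult_rep_def coset_point_def using that l2_zero_outside by fastforce
  moreover have "quasi_regular H g \<xi> =
      (if \<xi> \<in> l2 Q then (\<lambda>c. \<xi> (shift (- g) c)) else (\<lambda>_. 0))"
    by (simp add: quasi_regular_def shift_def)
  ultimately show ?thesis
    unfolding gen_op_def by (simp add: shift_l2)
qed

lemma gen_op_apply: "\<xi> \<in> l2 Q \<Longrightarrow> gen_op f g \<xi> = (\<lambda>c. f (coset_point c) * \<xi> (shift (- g) c))"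
  by (simp add: gen_op_eq)

lemma l2norm_gen_op_le:
  assumes \<xi>: "\<xi> \<in> l2 Q" and B: "\<And>y. cmod (f y) \<le> B"
  shows "l2norm Q (gen_op f g \<xi>) \<le> B * l2norm Q \<xi>"
proof -
  have "l2norm Q (gen_op f g \<xi>) \<le> B * l2norm Q (\<lambda>c. \<xi> (shift (- g) c))"
    unfolding gen_op_apply[OF \<xi>] using order.trans[OF norm_ge_zero B]
    by (intro l2norm_dominated shift_l2 \<xi> l2_mult_bounded[OF shift_l2[OF \<xi>] B])
       (auto simp: norm_mult intro: mult_right_mono B)
  then show ?thesis by (simp add: l2norm_shift)
qed

lemma bounded_op_gen_op:
  assumes B: "\<And>y. cmod (f y) \<le> B"
  shows "bounded_op Q (gen_op f g)"
proof (rule bounded_opI[where K = B])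
  fix \<xi> \<eta> :: "'g set \<Rightarrow> complex" and a assume "\<xi> \<in> l2 Q" "\<eta> \<in> l2 Q"
  then show "gen_op f g (\<lambda>c. a * \<xi> c + \<eta> c) = (\<lambda>c. a * gen_op f g \<xi> c + gen_op f g \<eta> c)"
    by (simp add: gen_op_eq l2_add l2_scale algebra_simps)
next
  fix \<xi> :: "'g set \<Rightarrow> complex" assume "\<xi> \<in> l2 Q"
  then show "l2norm Q (gen_op f g \<xi>) \<le> B * l2norm Q \<xi>"
    by (rule l2norm_gen_op_le[OF _ B])
qed (auto simp: gen_op_eq l2_mult_bounded[OF shift_l2 B])

lemma opnorm_gen_op_le:
  "(\<And>y. cmod (f y) \<le> B) \<Longrightarrow> opnorm Q (gen_op f g) \<le> B"
  using norm_ge_zero order.trans by (intro opnorm_leI l2norm_gen_op_le) blast+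

lemma crossed_alg_bounded: "T \<in> crossed_alg act x \<Longrightarrow> bounded_op Q T"
  unfolding crossed_alg_def Let_def by auto

lemma gen_op_in_crossed_alg:
  assumes "continuous_on UNIV f" "\<And>y. cmod (f y) \<le> B"
  shows "gen_op f g \<in> crossed_alg act x"
proof -
  let ?G = "{(\<lambda>\<xi>. mult_rep act x H f (quasi_regular H g \<xi>)) | f g. continuous_on UNIV f}"
  have "gen_op f g \<in> ?G" using assms(1) unfolding gen_op_def[abs_def] by blast
  then have "gen_op f g \<in> cspan ?G"
    unfolding cspan_def
    by (intro CollectI exI[of _ "1::nat"] exI[of _ "\<lambda>_. 1"] exI[of _ "\<lambda>_. gen_op f g"]) simp
  then have "\<forall>\<epsilon>>0. \<exists>S\<in>cspan ?G. opnorm Q (op_diff (gen_op f g) S) < \<epsilon>"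
    using opnorm_op_diff_self[of Q "gen_op f g"] by (intro allI impI bexI[of _ "gen_op f g"]) auto
  then show ?thesis
    using bounded_op_gen_op[of f B g] assms(2) unfolding crossed_alg_def Let_def by blast
qed

lemma crossed_alg_approx:
  assumes "T \<in> crossed_alg act x" "\<epsilon> > 0"
  obtains n :: nat and \<alpha> fs gs where "\<And>i. i < n \<Longrightarrow> continuous_on UNIV (fs i)"
    "opnorm Q (op_diff T (\<lambda>\<xi> c. \<Sum>i<n. \<alpha> i * gen_op (fs i) (gs i) \<xi> c)) < \<epsilon>"
proof -
  let ?G = "{(\<lambda>\<xi>. mult_rep act x H f (quasi_regular H g \<xi>)) | f g. continuous_on UNIV f}"
  obtain S where "S \<in> cspan ?G" "opnorm Q (op_diff T S) < \<epsilon>"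
    using assms unfolding crossed_alg_def Let_def by auto
  then obtain n :: nat and \<alpha> T' where T': "\<And>i. i < n \<Longrightarrow> T' i \<in> ?G"
    and S: "S = (\<lambda>\<xi> c. \<Sum>i<n. \<alpha> i * T' i \<xi> c)" "opnorm Q (op_diff T S) < \<epsilon>"
    unfolding cspan_def by blast
  have "\<forall>i. \<exists>p. i < n \<longrightarrow> continuous_on UNIV (fst p) \<and> T' i = gen_op (fst p) (snd p)"
    using T' unfolding gen_op_def[abs_def] by fastforce
  then obtain p where p: "\<And>i. i < n \<Longrightarrow> continuous_on UNIV (fst (p i)) \<and> T' i = gen_op (fst (p i)) (snd (p i))"
    by metis
  have "S = (\<lambda>\<xi> c. \<Sum>i<n. \<alpha> i * gen_op (fst (p i)) (snd (p i)) \<xi> c)"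
    unfolding S(1) using p by (intro ext sum.cong) auto
  then show ?thesis
    using that[of n "\<lambda>i. fst (p i)" \<alpha> "\<lambda>i. snd (p i)"] p S(2) by auto
qed

definition translation :: "'g \<Rightarrow> 'g set op" where
  "translation g = gen_op (\<lambda>_. 1) g"

definition mult_op :: "('x \<Rightarrow> complex) \<Rightarrow> 'g set op" where
  "mult_op f = gen_op f 0"

lemma translation_apply: "\<xi> \<in> l2 Q \<Longrightarrow> translation g \<xi> = (\<lambda>c. \<xi> (shift (- g) c))"
  by (simp add: translation_def gen_op_apply)

lemma mult_op_apply: "\<xi> \<in> l2 Q \<Longrightarrow> mult_op f \<xi> = (\<lambda>c. f (coset_point c) * \<xi> c)"
  by (simp add: mult_op_def gen_op_apply)

lemma bounded_op_translation: "bounded_op Q (translation g)"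
  unfolding translation_def by (rule bounded_op_gen_op[where B = 1]) simp

lemma bounded_op_mult_op: "(\<And>y. cmod (f y) \<le> B) \<Longrightarrow> bounded_op Q (mult_op f)"
  unfolding mult_op_def by (rule bounded_op_gen_op)

lemma opnorm_mult_op_le: "(\<And>y. cmod (f y) \<le> B) \<Longrightarrow> opnorm Q (mult_op f) \<le> B"
  unfolding mult_op_def by (rule opnorm_gen_op_le)

lemma l2norm_translation: "\<xi> \<in> l2 Q \<Longrightarrow> l2norm Q (translation g \<xi>) = l2norm Q \<xi>"
  by (simp add: translation_apply l2norm_shift)

lemma translation_in_crossed_alg: "translation g \<in> crossed_alg act x"
  unfolding translation_def by (rule gen_op_in_crossed_alg[where B = 1]) auto

lemma mult_op_in_crossed_alg:
  "continuous_on UNIV f \<Longrightarrow> (\<And>y. cmod (f y) \<le> B) \<Longrightarrow> mult_op f \<in> crossed_alg act x"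
  unfolding mult_op_def by (rule gen_op_in_crossed_alg)

lemma id_op_eq_mult_op_one: "id_op Q = mult_op (\<lambda>_. 1)"
  by (simp add: fun_eq_iff id_op_def mult_op_def gen_op_eq)

lemma id_op_in_crossed_alg: "id_op Q \<in> crossed_alg act x"
  unfolding id_op_eq_mult_op_one by (rule mult_op_in_crossed_alg[where B = 1]) auto

lemma translation_delta_H: "translation g (delta H) = delta (lcoset g H)"
proof -
  have "shift (- g) c = H \<longleftrightarrow> c = lcoset g H" for c
    unfolding lcoset_eq_shift by (metis shift_shift_uminus shift_uminus_shift)
  then show ?thesis
    unfolding translation_apply[OF delta_in_l2[OF H_in_Q]] by (simp add: fun_eq_iff delta_def)
qed

lemma translation_mult_op_translation:
  assumes \<xi>: "\<xi> \<in> l2 Q" and B: "\<And>y. cmod (f y) \<le> B"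
  shows "translation (- g) (mult_op f (translation g \<xi>)) = mult_op (\<lambda>y. f (act g y)) \<xi>"
proof
  fix e
  have t: "translation g \<xi> \<in> l2 Q" by (rule bounded_op_l2[OF bounded_op_translation \<xi>])
  have "mult_op f (translation g \<xi>) \<in> l2 Q" by (rule bounded_op_l2[OF bounded_op_mult_op[OF B] t])
  then have "translation (- g) (mult_op f (translation g \<xi>)) e = f (coset_point (shift g e)) * \<xi> e"
    by (simp add: translation_apply mult_op_apply \<xi> shift_l2)
  then show "translation (- g) (mult_op f (translation g \<xi>)) e = mult_op (\<lambda>y. f (act g y)) \<xi> e"
    by (cases "e \<in> Q") (simp_all add: mult_op_apply[OF \<xi>] coset_point_shift l2_zero_outside[OF \<xi>])
qed

section \<open>Nonzero closed ideals\<close>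

lemma finite_translates_cover:
  assumes minimal: "minimal_action act" and cpt: "compact (UNIV :: 'x set)"
    and V: "open V" "V \<noteq> {}"
  obtains S where "finite S" "\<And>y. \<exists>s\<in>S. act s y \<in> V"
proof -
  have "\<exists>s. act s y \<in> V" for y
  proof -
    have "V \<inter> closure (range (\<lambda>g. act g y)) \<noteq> {}"
      using minimal V(2) by (simp add: minimal_action_def)
    then show ?thesis using open_Int_closure_eq_empty[OF V(1)] by blast
  qed
  then have "UNIV \<subseteq> (\<Union>s. act s -` V)" by blast
  then obtain S where "finite S" "UNIV \<subseteq> (\<Union>s\<in>S. act s -` V)"
    using compactE_image[OF cpt, of UNIV "\<lambda>s. act s -` V"] open_vimage_act[OF V(1)] by metis
  then show ?thesis using that by blast
qed

lemma open_subset_avoiding_fixed_points: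
  assumes "finite G" "open V" "V \<noteq> {}" "\<And>g y. g \<in> G \<Longrightarrow> y \<in> V \<Longrightarrow> g \<notin> Gamma0 act y"
  shows "\<exists>V'. open V' \<and> V' \<noteq> {} \<and> V' \<subseteq> V \<and> (\<forall>g\<in>G. \<forall>y\<in>V'. act g y \<noteq> y)"
  using assms
proof (induction G rule: finite_induct)
  case empty
  then show ?case by blast
next
  case (insert g G)
  then obtain V' where V': "open V'" "V' \<noteq> {}" "V' \<subseteq> V" "\<forall>g\<in>G. \<forall>y\<in>V'. act g y \<noteq> y"
    by auto
  \<comment> \<open>the fixed points of \<open>g\<close> form a closed set with empty interior in \<open>V\<close>\<close>
  define V'' where "V'' = V' - {y. act g y = y}"
  have "open V''"
    unfolding V''_def using V'(1) closed_Collect_eq[OF continuous_on_act continuous_on_id]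
    by (rule open_Diff)
  moreover have "V'' \<noteq> {}"
  proof
    assume "V'' = {}"
    then obtain y where "y \<in> V'" "\<And>z. z \<in> V' \<Longrightarrow> act g z = z"
      using V'(2) unfolding V''_def by auto
    then show False
      using in_Gamma0_if_fixes_open[OF V'(1)] insert.prems(3) V'(3) by blast
  qed
  moreover have "V'' \<subseteq> V" "\<forall>h\<in>insert g G. \<forall>y\<in>V''. act h y \<noteq> y"
    using V' unfolding V''_def by auto
  ultimately show ?case by blast
qed

lemma nbhd_fixed_or_moved:
  assumes G: "finite G" and fixed_or_moved: "\<And>g. g \<in> G \<Longrightarrow> g \<in> Gamma0 act z \<or> act g z \<noteq> z"
  obtains W where "open W" "z \<in> W"
    "\<And>g y. g \<in> G \<Longrightarrow> g \<in> Gamma0 act z \<Longrightarrow> y \<in> W \<Longrightarrow> act g y = y"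
    "\<And>g y. g \<in> G \<Longrightarrow> g \<notin> Gamma0 act z \<Longrightarrow> y \<in> W \<Longrightarrow> act g y \<notin> W"
proof -
  have "\<exists>N. open N \<and> z \<in> N \<and> (g \<in> Gamma0 act z \<longrightarrow> (\<forall>y\<in>N. act g y = y)) \<and>
          (g \<notin> Gamma0 act z \<longrightarrow> (\<forall>y\<in>N. act g y \<notin> N))" if "g \<in> G" for g
  proof (cases "g \<in> Gamma0 act z")
    case True
    then show ?thesis unfolding Gamma0_def by blast
  next
    case False
    then have "act g z \<noteq> z" using fixed_or_moved that by blast
    then obtain A B where AB: "open A" "open B" "z \<in> A" "act g z \<in> B" "A \<inter> B = {}"
      using hausdorff by metis
    then have "open (A \<inter> act g -` B) \<and> z \<in> A \<inter> act g -` B \<and>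
               (\<forall>y\<in>A \<inter> act g -` B. act g y \<notin> A \<inter> act g -` B)"
      using open_vimage_act[OF AB(2)] by auto
    then show ?thesis using False by blast
  qed
  then obtain N where N: "\<And>g. g \<in> G \<Longrightarrow> open (N g) \<and> z \<in> N g \<and>
      (g \<in> Gamma0 act z \<longrightarrow> (\<forall>y\<in>N g. act g y = y)) \<and> (g \<notin> Gamma0 act z \<longrightarrow> (\<forall>y\<in>N g. act g y \<notin> N g))"
    by metis
  show ?thesis
    by (rule that[of "\<Inter>g\<in>G. N g"]) (use G N in \<open>auto intro: open_INT\<close>)
qed

text \<open>The only use of \<open>x \<in> X\<^sub>0\<^sup>0\<close>: near \<open>x\<close> the stabilisers \<open>\<Gamma>\<^sub>y\<^sup>0\<close> agree with \<open>\<Gamma>\<^sub>x\<^sup>0\<close> on a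
  finite set \<open>G\<close>, and the elements of \<open>G - \<Gamma>\<^sub>x\<^sup>0\<close>, having no interior fixed points there, can be made
  to move a small open set off itself.\<close>
lemma X00_localization:
  assumes x: "x \<in> X00 act" and G: "finite G" and U: "open U" "x \<in> U"
  obtains W where "open W" "W \<noteq> {}" "W \<subseteq> U"
    "\<And>g y. g \<in> G \<Longrightarrow> g \<in> H \<Longrightarrow> y \<in> W \<Longrightarrow> act g y = y"
    "\<And>g y. g \<in> G \<Longrightarrow> g \<notin> H \<Longrightarrow> y \<in> W \<Longrightarrow> act g y \<notin> W"
proof -
  have "\<exists>U'. open U' \<and> x \<in> U' \<and> (\<forall>y\<in>U'. g \<in> Gamma0 act y \<longleftrightarrow> g \<in> H)" for g
    using x unfolding X00_def by blast
  then obtain U' where U': "\<And>g. open (U' g)" "\<And>g. x \<in> U' g"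
    "\<And>g y. y \<in> U' g \<Longrightarrow> g \<in> Gamma0 act y \<longleftrightarrow> g \<in> H"
    by metis
  define U'' where "U'' = U \<inter> (\<Inter>g\<in>G. U' g)"
  have "open U''"
    unfolding U''_def using U(1) U'(1) G by (intro open_Int open_INT) auto
  moreover have "U'' \<noteq> {}"
    unfolding U''_def using U(2) U'(2) by blast
  moreover have "g \<notin> Gamma0 act y" if "g \<in> G - H" "y \<in> U''" for g y
    using U'(3)[of y g] that unfolding U''_def by blast
  ultimately have "\<exists>V. open V \<and> V \<noteq> {} \<and> V \<subseteq> U'' \<and> (\<forall>g\<in>G - H. \<forall>y\<in>V. act g y \<noteq> y)"
    using G by (intro open_subset_avoiding_fixed_points) auto
  then obtain V where V: "open V" "V \<noteq> {}" "V \<subseteq> U''"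
    "\<And>g y. g \<in> G - H \<Longrightarrow> y \<in> V \<Longrightarrow> act g y \<noteq> y"
    by blast
  obtain z where z: "z \<in> V" using V(2) by blast
  have z_stab: "g \<in> Gamma0 act z \<longleftrightarrow> g \<in> H" if "g \<in> G" for g
    using U'(3)[of z g] V(3) z that unfolding U''_def by blast
  obtain N where N: "open N" "z \<in> N"
    "\<And>g y. g \<in> G \<Longrightarrow> g \<in> Gamma0 act z \<Longrightarrow> y \<in> N \<Longrightarrow> act g y = y"
    "\<And>g y. g \<in> G \<Longrightarrow> g \<notin> Gamma0 act z \<Longrightarrow> y \<in> N \<Longrightarrow> act g y \<notin> N"
    using nbhd_fixed_or_moved[OF G, of z] z_stab V(4) z by blast
  show ?thesis
    by (rule that[of "V \<inter> N"]) (use V N z z_stab in \<open>auto simp: U''_def\<close>)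
qed

lemma gen_op_sum_delta_H_entry:
  fixes n :: nat
  shows "(\<Sum>i<n. \<alpha> i * gen_op (fs i) (gs i) (delta H) H) = (\<Sum>i\<in>{i\<in>{..<n}. gs i \<in> H}. \<alpha> i * fs i x)"
proof -
  have "(\<Sum>i<n. \<alpha> i * gen_op (fs i) (gs i) (delta H) H) =
        (\<Sum>i<n. if gs i \<in> H then \<alpha> i * fs i x else 0)"
    unfolding gen_op_apply[OF delta_in_l2[OF H_in_Q]]
    by (intro sum.cong) (auto simp: coset_point_H delta_def shift_eq_H_iff)
  also have "\<dots> = (\<Sum>i\<in>{i\<in>{..<n}. gs i \<in> H}. \<alpha> i * fs i x)"
    by (rule sum.inter_filter[symmetric]) simp
  finally show ?thesis .
qed

lemma closed_ideal_delta_H_entry: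
  assumes J: "closed_ideal Q (crossed_alg act x) J" and nz: "J \<noteq> {zero_op}"
  obtains a where "a \<in> J" "a (delta H) H \<noteq> 0"
proof -
  have JA: "J \<subseteq> crossed_alg act x" and zero: "zero_op \<in> J"
    and mult: "\<And>a j. a \<in> crossed_alg act x \<Longrightarrow> j \<in> J \<Longrightarrow> a \<circ> j \<in> J \<and> j \<circ> a \<in> J"
    using J unfolding closed_ideal_def by blast+
  obtain b where b: "b \<in> J" "b \<noteq> zero_op" using nz zero by blast
  have bounded_b: "bounded_op Q b" using b(1) JA crossed_alg_bounded by blast
  obtain \<xi> c where "b \<xi> c \<noteq> 0" using b(2) by (auto simp: zero_op_def fun_eq_iff)
  then obtain d where d: "d \<in> Q" "b (delta d) c \<noteq> 0"
    using bounded_op_delta_entry_nonzero[OF bounded_b] by blast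
  have b_d: "b (delta d) \<in> l2 Q"
    by (rule bounded_op_l2[OF bounded_b delta_in_l2[OF d(1)]])
  then have "c \<in> Q" using l2_zero_outside[OF b_d, of c] d(2) by auto
  then obtain r where r: "c = lcoset r H" by (auto simp: mem_cosets_iff)
  obtain t where t: "d = lcoset t H" using d(1) by (auto simp: mem_cosets_iff)
  \<comment> \<open>translate the nonzero matrix entry \<open>(c, d)\<close> of \<open>b\<close> to the vacuum entry \<open>(H, H)\<close>\<close>
  have "(translation (- r) \<circ> b \<circ> translation t) (delta H) H = b (delta d) c"
    using b_d by (simp add: translation_delta_H t translation_apply r lcoset_eq_shift)
  moreover have "translation (- r) \<circ> b \<circ> translation t \<in> J"
    using mult translation_in_crossed_alg b(1) by (metis comp_assoc)
  ultimately show ?thesis using that d(2) by metis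
qed

lemma gen_op_sum_local_diagonal:
  fixes n :: nat
  assumes W: "open W"
    and fixed: "\<And>i y. i < n \<Longrightarrow> gs i \<in> H \<Longrightarrow> y \<in> W \<Longrightarrow> act (- gs i) y = y"
    and moved: "\<And>i y. i < n \<Longrightarrow> gs i \<notin> H \<Longrightarrow> y \<in> W \<Longrightarrow> act (- gs i) y \<notin> W"
    and \<eta>: "\<eta> \<in> l2 Q" and supp: "\<And>e. e \<in> Q \<Longrightarrow> coset_point e \<notin> W \<Longrightarrow> \<eta> e = 0"
    and e: "e \<in> Q" "coset_point e \<in> W"
  shows "(\<Sum>i<n. \<alpha> i * gen_op (fs i) (gs i) \<eta> e) =
         (\<Sum>i\<in>{i\<in>{..<n}. gs i \<in> H}. \<alpha> i * fs i (coset_point e)) * \<eta> e"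
proof -
  have "\<eta> (shift (- gs i) e) = (if gs i \<in> H then \<eta> e else 0)" if "i < n" for i
  proof (cases "gs i \<in> H")
    case True
    then have "- gs i \<in> Gamma0 act (coset_point e)"
      using fixed[OF that] by (intro in_Gamma0_if_fixes_open[OF W e(2)]) auto
    then show ?thesis using True shift_fixes_coset[OF e(1)] by simp
  next
    case False
    then have "coset_point (shift (- gs i) e) \<notin> W"
      using moved[OF that] e by (simp add: coset_point_shift)
    then show ?thesis using False supp e(1) by simp
  qed
  then have "(\<Sum>i<n. \<alpha> i * gen_op (fs i) (gs i) \<eta> e) =
             (\<Sum>i<n. if gs i \<in> H then \<alpha> i * fs i (coset_point e) * \<eta> e else 0)"
    by (intro sum.cong) (simp_all add: gen_op_apply[OF \<eta>])
  also have "\<dots> = (\<Sum>i\<in>{i\<in>{..<n}. gs i \<in> H}. \<alpha> i * fs i (coset_point e) * \<eta> e)"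
    by (rule sum.inter_filter[symmetric]) simp
  finally show ?thesis by (simp add: sum_distrib_right)
qed

text \<open>Compressing by a cut-off \<open>h\<close> supported in a set \<open>W\<close> obtained from \<open>X00_localization\<close> kills the
  off-diagonal part of a finite sum of generators, and \<open>k\<close> inverts the remaining diagonal part.\<close>
lemma compression_eq_mult_op:
  fixes n :: nat
  assumes W: "open W"
    and fixed: "\<And>i y. i < n \<Longrightarrow> gs i \<in> H \<Longrightarrow> y \<in> W \<Longrightarrow> act (- gs i) y = y"
    and moved: "\<And>i y. i < n \<Longrightarrow> gs i \<notin> H \<Longrightarrow> y \<in> W \<Longrightarrow> act (- gs i) y \<notin> W"
    and bounded_S: "bounded_op Q (\<lambda>\<xi> c. \<Sum>i<n. \<alpha> i * gen_op (fs i) (gs i) \<xi> c)"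
    and h: "\<And>y. cmod (h y) \<le> 1" "\<And>y. y \<notin> W \<Longrightarrow> h y = 0"
    and k: "\<And>y. y \<in> W \<Longrightarrow> k y * (\<Sum>i\<in>{i\<in>{..<n}. gs i \<in> H}. \<alpha> i * fs i y) = 1"
  shows "mult_op (\<lambda>y. k y * h y) \<circ> (\<lambda>\<xi> c. \<Sum>i<n. \<alpha> i * gen_op (fs i) (gs i) \<xi> c) \<circ> mult_op h =
         mult_op (\<lambda>y. h y * h y)"
proof
  fix \<xi>
  define S where "S = (\<lambda>\<xi> c. \<Sum>i<n. \<alpha> i * gen_op (fs i) (gs i) \<xi> c)"
  note bounded_S = bounded_S[folded S_def]
  show "(mult_op (\<lambda>y. k y * h y) \<circ> S \<circ> mult_op h) \<xi> = mult_op (\<lambda>y. h y * h y) \<xi>"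
  proof (cases "\<xi> \<in> l2 Q")
    case True
    define \<eta> where "\<eta> = mult_op h \<xi>"
    have \<eta>: "\<eta> \<in> l2 Q"
      unfolding \<eta>_def by (rule bounded_op_l2[OF bounded_op_mult_op[OF h(1)] True])
    have diag: "S \<eta> e = (\<Sum>i\<in>{i\<in>{..<n}. gs i \<in> H}. \<alpha> i * fs i (coset_point e)) * \<eta> e"
      if "e \<in> Q" "coset_point e \<in> W" for e
      unfolding S_def using \<eta> that h(2)
      by (intro gen_op_sum_local_diagonal[OF W fixed moved]) (auto simp: \<eta>_def mult_op_apply[OF True])
    have "k (coset_point e) * h (coset_point e) * S \<eta> e = h (coset_point e) * h (coset_point e) * \<xi> e"
      for e
      using diag[of e] k[of "coset_point e"] h(2)[of "coset_point e"]
        l2_zero_outside[OF bounded_op_l2[OF bounded_S \<eta>], of e] l2_zero_outside[OF True, of e]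
      by (cases "e \<in> Q"; cases "coset_point e \<in> W")
         (auto simp: \<eta>_def mult_op_apply[OF True] algebra_simps)
    then show ?thesis
      using True bounded_op_l2[OF bounded_S \<eta>] by (simp add: fun_eq_iff mult_op_apply \<eta>_def[symmetric])
  next
    case False
    then show ?thesis
      by (simp add: mult_op_def gen_op_eq bounded_op_zero[OF bounded_S])
  qed
qed

lemma bounded_op_gen_op_sum:
  fixes n :: nat
  assumes cpt: "compact (UNIV :: 'x set)" and fs: "\<And>i. i < n \<Longrightarrow> continuous_on UNIV (fs i)"
  shows "bounded_op Q (\<lambda>\<xi> c. \<Sum>i<n. \<alpha> i * gen_op (fs i) (gs i) \<xi> c)"
proof (rule bounded_op_sum_ops)
  fix i assume "i < n"
  then obtain B where "\<And>y. cmod (fs i y) \<le> B"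
    using continuous_on_compact_UNIV_bounded[OF cpt fs] by blast
  then show "bounded_op Q (gen_op (fs i) (gs i))" by (rule bounded_op_gen_op)
qed

lemma localized_cutoffs:
  fixes n :: nat and \<alpha> :: "nat \<Rightarrow> complex" and fs :: "nat \<Rightarrow> 'x \<Rightarrow> complex" and gs :: "nat \<Rightarrow> 'g"
  assumes x: "x \<in> X00 act" and cpt: "compact (UNIV :: 'x set)"
    and fs: "\<And>i. i < n \<Longrightarrow> continuous_on UNIV (fs i)" and \<beta>: "\<beta> > 0"
    and Fx: "\<beta> < cmod (\<Sum>i\<in>{i\<in>{..<n}. gs i \<in> H}. \<alpha> i * fs i x)"
  obtains h k V where "continuous_on UNIV h" "\<And>y. cmod (h y) \<le> 1"
    "continuous_on UNIV k" "\<And>y. cmod (k y) \<le> 1 / \<beta>" "open V" "V \<noteq> {}" "\<And>y. y \<in> V \<Longrightarrow> h y = 1"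
    "mult_op (\<lambda>y. k y * h y) \<circ> (\<lambda>\<xi> c. \<Sum>i<n. \<alpha> i * gen_op (fs i) (gs i) \<xi> c) \<circ> mult_op h =
     mult_op (\<lambda>y. h y * h y)"
proof -
  define F where "F y = (\<Sum>i\<in>{i\<in>{..<n}. gs i \<in> H}. \<alpha> i * fs i y)" for y
  have F: "continuous_on UNIV F"
    unfolding F_def by (intro continuous_intros fs) auto
  have U: "open {y. \<beta> < cmod (F y)}"
    by (intro open_Collect_less continuous_intros F)
  obtain W where W: "open W" "W \<noteq> {}" "W \<subseteq> {y. \<beta> < cmod (F y)}"
    "\<And>g y. g \<in> uminus ` gs ` {..<n} \<Longrightarrow> g \<in> H \<Longrightarrow> y \<in> W \<Longrightarrow> act g y = y"
    "\<And>g y. g \<in> uminus ` gs ` {..<n} \<Longrightarrow> g \<notin> H \<Longrightarrow> y \<in> W \<Longrightarrow> act g y \<notin> W"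
    by (rule X00_localization[of "uminus ` gs ` {..<n}", OF x _ U]) (use Fx in \<open>auto simp: F_def\<close>)
  obtain h0 :: "'x \<Rightarrow> real" and V where h0: "continuous_on UNIV h0" "\<And>y. 0 \<le> h0 y" "\<And>y. h0 y \<le> 1"
    "\<And>y. y \<notin> W \<Longrightarrow> h0 y = 0" and V: "open V" "V \<noteq> {}" "\<And>y. y \<in> V \<Longrightarrow> h0 y = 1"
    by (rule plateau_function[OF cpt W(1,2)]) auto
  define h where "h y = complex_of_real (h0 y)" for y
  have h: "continuous_on UNIV h" "\<And>y. cmod (h y) \<le> 1" "\<And>y. y \<notin> W \<Longrightarrow> h y = 0"
    using h0 unfolding h_def by (auto intro: continuous_intros)
  obtain k where k: "continuous_on UNIV k" "\<And>y. cmod (k y) \<le> 1 / \<beta>"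
    "\<And>y. \<beta> < cmod (F y) \<Longrightarrow> k y * F y = 1"
    using bounded_inverse_cutoff[OF F \<beta>] by blast
  show ?thesis
  proof (rule that[OF h(1,2) k(1,2) V(1,2)])
    show "h y = 1" if "y \<in> V" for y using V(3)[OF that] by (simp add: h_def)
    show "mult_op (\<lambda>y. k y * h y) \<circ> (\<lambda>\<xi> c. \<Sum>i<n. \<alpha> i * gen_op (fs i) (gs i) \<xi> c) \<circ> mult_op h =
        mult_op (\<lambda>y. h y * h y)"
    proof (rule compression_eq_mult_op[OF W(1) _ _ bounded_op_gen_op_sum[OF cpt fs] h(2,3)])
      show "act (- gs i) y = y" if "i < n" "gs i \<in> H" "y \<in> W" for i y
        using W(4)[of "- gs i" y] that by auto
      show "act (- gs i) y \<notin> W" if "i < n" "gs i \<notin> H" "y \<in> W" for i y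
        using W(5)[of "- gs i" y] that by auto
      show "k y * (\<Sum>i\<in>{i\<in>{..<n}. gs i \<in> H}. \<alpha> i * fs i y) = 1" if "y \<in> W" for y
        using k(3) W(3) that by (auto simp: F_def)
    qed
  qed
qed

lemma opnorm_compression_diff_le:
  assumes T: "bounded_op Q T" and S: "bounded_op Q S"
    and k: "\<And>y. cmod (k y) \<le> K" and h: "\<And>y. cmod (h y) \<le> 1"
    and compression: "mult_op k \<circ> S \<circ> mult_op h = mult_op \<psi>"
  shows "opnorm Q (op_diff (mult_op k \<circ> T \<circ> mult_op h) (mult_op \<psi>)) \<le> K * opnorm Q (op_diff T S)"
proof -
  have K: "0 \<le> K" using order.trans[OF norm_ge_zero k] .
  have "opnorm Q (op_diff (mult_op k \<circ> T \<circ> mult_op h) (mult_op \<psi>)) =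
      opnorm Q (mult_op k \<circ> op_diff T S \<circ> mult_op h)"
    unfolding compression[symmetric]
    by (rule arg_cong[OF op_diff_sandwich[OF bounded_op_mult_op[OF k] T S]])
  also have "\<dots> \<le> opnorm Q (mult_op k) * opnorm Q (op_diff T S) * opnorm Q (mult_op h)"
    by (rule opnorm_comp3_le[OF bounded_op_mult_op[OF k] bounded_op_op_diff[OF T S]
          bounded_op_mult_op[OF h]])
  also have "\<dots> \<le> K * opnorm Q (op_diff T S) * 1"
    using K opnorm_nonneg[OF bounded_op_op_diff[OF T S]] opnorm_nonneg[OF bounded_op_mult_op[OF h]]
    by (intro mult_mono opnorm_mult_op_le[OF k] opnorm_mult_op_le[OF h]) auto
  finally show ?thesis by simp
qed

lemma closed_ideal_near_mult_op:
  assumes x: "x \<in> X00 act" and cpt: "compact (UNIV :: 'x set)"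
    and J: "closed_ideal Q (crossed_alg act x) J" and nz: "J \<noteq> {zero_op}"
  obtains j \<psi> V where "j \<in> J" "\<And>y. cmod (\<psi> y) \<le> 1"
    "open V" "V \<noteq> {}" "\<And>y. y \<in> V \<Longrightarrow> \<psi> y = 1" "opnorm Q (op_diff j (mult_op \<psi>)) \<le> 1/2"
proof -
  have JA: "J \<subseteq> crossed_alg act x"
    and mult: "\<And>a j. a \<in> crossed_alg act x \<Longrightarrow> j \<in> J \<Longrightarrow> a \<circ> j \<in> J \<and> j \<circ> a \<in> J"
    using J unfolding closed_ideal_def by blast+
  obtain a where a: "a \<in> J" "a (delta H) H \<noteq> 0"
    using closed_ideal_delta_H_entry[OF J nz] by blast
  define \<beta> where "\<beta> = cmod (a (delta H) H) / 4"
  have \<beta>: "\<beta> > 0" using a(2) by (simp add: \<beta>_def)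
  have "a \<in> crossed_alg act x" "\<beta> / 2 > 0" using a(1) JA \<beta> by auto
  then obtain n :: nat and fs \<alpha> gs where fs: "\<And>i. i < n \<Longrightarrow> continuous_on UNIV (fs i)"
    and approx: "opnorm Q (op_diff a (\<lambda>\<xi> c. \<Sum>i<n. \<alpha> i * gen_op (fs i) (gs i) \<xi> c)) < \<beta> / 2"
    by (rule crossed_alg_approx) auto
  define S where "S = (\<lambda>\<xi> c. \<Sum>i<n. \<alpha> i * gen_op (fs i) (gs i) \<xi> c)"
  have bounded_a: "bounded_op Q a" using a(1) JA crossed_alg_bounded by blast
  have bounded_S: "bounded_op Q S"
    unfolding S_def by (rule bounded_op_gen_op_sum[OF cpt fs])
  \<comment> \<open>the vacuum entry of \<open>S\<close> is its diagonal part at \<open>x\<close>, which therefore stays away from \<open>0\<close>\<close>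
  have "cmod (a (delta H) H - (\<Sum>i\<in>{i\<in>{..<n}. gs i \<in> H}. \<alpha> i * fs i x)) < \<beta> / 2"
    using norm_entry_diff_le_opnorm[OF bounded_a bounded_S delta_in_l2[OF H_in_Q], of H] approx
    by (simp add: l2norm_delta H_in_Q S_def gen_op_sum_delta_H_entry)
  then have Fx: "\<beta> < cmod (\<Sum>i\<in>{i\<in>{..<n}. gs i \<in> H}. \<alpha> i * fs i x)"
    using norm_triangle_ineq2[of "a (delta H) H" "\<Sum>i\<in>{i\<in>{..<n}. gs i \<in> H}. \<alpha> i * fs i x"]
      norm_ge_zero[of "a (delta H) H"]
    unfolding \<beta>_def by linarith
  obtain h k V where h: "continuous_on UNIV h" "\<And>y. cmod (h y) \<le> 1"
    and k: "continuous_on UNIV k" "\<And>y. cmod (k y) \<le> 1 / \<beta>" and V: "open V" "V \<noteq> {}" "\<And>y. y \<in> V \<Longrightarrow> h y = 1"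
    and compression: "mult_op (\<lambda>y. k y * h y) \<circ> S \<circ> mult_op h = mult_op (\<lambda>y. h y * h y)"
    by (rule localized_cutoffs[OF x cpt fs \<beta> Fx, folded S_def]) auto
  have kh: "cmod (k y * h y) \<le> 1 / \<beta>" for y
    using mult_mono[OF k(2)[of y] h(2)[of y]] \<beta> by (simp add: norm_mult)
  define j where "j = mult_op (\<lambda>y. k y * h y) \<circ> a \<circ> mult_op h"
  have "j \<in> J"
    unfolding j_def using mult a(1) mult_op_in_crossed_alg h(1,2) k(1) kh by (metis continuous_on_mult)
  moreover have "cmod (h y * h y) \<le> 1" for y
    using mult_le_one[OF h(2) _ h(2)] by (simp add: norm_mult)
  moreover have "opnorm Q (op_diff j (mult_op (\<lambda>y. h y * h y))) \<le> 1/2"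
  proof -
    have "opnorm Q (op_diff j (mult_op (\<lambda>y. h y * h y))) \<le> 1 / \<beta> * opnorm Q (op_diff a S)"
      unfolding j_def by (rule opnorm_compression_diff_le[OF bounded_a bounded_S kh h(2) compression])
    also have "\<dots> \<le> 1/2"
      using approx \<beta> by (simp add: S_def field_simps)
    finally show ?thesis .
  qed
  ultimately show ?thesis
    using that[of j "\<lambda>y. h y * h y" V] V by auto
qed

lemma l2norm_conjugate_translation_le:
  assumes E: "bounded_op Q E" and \<eta>: "\<eta> \<in> l2 Q"
  shows "l2norm Q (translation (- s) (E (translation s \<eta>))) \<le> opnorm Q E * l2norm Q \<eta>"
proof -
  have t: "translation s \<eta> \<in> l2 Q" by (rule bounded_op_l2[OF bounded_op_translation \<eta>])
  have "l2norm Q (translation (- s) (E (translation s \<eta>))) = l2norm Q (E (translation s \<eta>))"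
    by (rule l2norm_translation[OF bounded_op_l2[OF E t]])
  also have "\<dots> \<le> opnorm Q E * l2norm Q \<eta>"
    using l2norm_apply_le_opnorm[OF E t] by (simp add: l2norm_translation[OF \<eta>])
  finally show ?thesis .
qed

definition conj_average :: "('g \<Rightarrow> 'x \<Rightarrow> real) \<Rightarrow> 'g set \<Rightarrow> 'g set op \<Rightarrow> 'g set op" where
  "conj_average u S T = (\<lambda>\<xi> e. \<Sum>s\<in>S. (mult_op (\<lambda>y. of_real (u s y)) \<circ> translation (- s) \<circ> T \<circ>
     translation s \<circ> mult_op (\<lambda>y. of_real (u s y))) \<xi> e)"

lemma conj_average_in_closed_ideal:
  assumes J: "closed_ideal Q (crossed_alg act x) J" and T: "T \<in> J" and S: "finite S"
    and u: "\<And>s. continuous_on UNIV (u s)" "\<And>s y. s \<in> S \<Longrightarrow> \<bar>u s y\<bar> \<le> 1"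
  shows "conj_average u S T \<in> J"
  unfolding conj_average_def
proof (rule closed_ideal_sum[OF J S])
  fix s assume s: "s \<in> S"
  have mult: "\<And>a j. a \<in> crossed_alg act x \<Longrightarrow> j \<in> J \<Longrightarrow> a \<circ> j \<in> J \<and> j \<circ> a \<in> J"
    using J unfolding closed_ideal_def by blast
  have "mult_op (\<lambda>y. of_real (u s y)) \<in> crossed_alg act x"
    using u(2)[OF s] by (intro mult_op_in_crossed_alg[where B = 1] continuous_intros u(1)) auto
  then have "mult_op (\<lambda>y. of_real (u s y)) \<circ> (translation (- s) \<circ> (T \<circ> translation s \<circ>
      mult_op (\<lambda>y. of_real (u s y)))) \<in> J"
    using mult translation_in_crossed_alg T by blast
  then show "mult_op (\<lambda>y. of_real (u s y)) \<circ> translation (- s) \<circ> T \<circ> translation s \<circ>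
      mult_op (\<lambda>y. of_real (u s y)) \<in> J"
    by (simp add: comp_assoc)
qed

lemma conj_average_apply:
  assumes T: "bounded_op Q T" and \<xi>: "\<xi> \<in> l2 Q"
  shows "conj_average u S T \<xi> e = (\<Sum>s\<in>S. of_real (u s (coset_point e)) *
    translation (- s) (T (translation s (\<lambda>d. of_real (u s (coset_point d)) * \<xi> d))) e)"
  using bounded_op_l2[OF bounded_op_translation bounded_op_apply_l2[OF T]]
  by (simp add: conj_average_def mult_op_apply[OF \<xi>] mult_op_apply)

lemma conj_average_mult_op:
  fixes u :: "'g \<Rightarrow> 'x \<Rightarrow> real"
  assumes S: "finite S" and unit: "\<And>y. (\<Sum>s\<in>S. (u s y)\<^sup>2) = 1"
    and plateau: "\<And>s y. s \<in> S \<Longrightarrow> u s y \<noteq> 0 \<Longrightarrow> \<psi> (act s y) = 1"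
    and \<psi>: "\<And>y. cmod (\<psi> y) \<le> 1" and \<xi>: "\<xi> \<in> l2 Q"
  shows "conj_average u S (mult_op \<psi>) \<xi> = \<xi>"
proof
  fix e
  have "of_real (u s (coset_point e)) *
      translation (- s) (mult_op \<psi> (translation s (\<lambda>d. of_real (u s (coset_point d)) * \<xi> d))) e =
      of_real ((u s (coset_point e))\<^sup>2) * \<xi> e" if s: "s \<in> S" for s
  proof -
    have "(\<lambda>d. of_real (u s (coset_point d)) * \<xi> d) \<in> l2 Q"
      using abs_le_one_if_sum_squares_le_one[OF S s, of "\<lambda>s. u s _"] unit
      by (intro l2_mult_bounded[OF \<xi>, where B = 1]) auto
    then show ?thesis
      using plateau[OF s, of "coset_point e"]
      by (cases "u s (coset_point e) = 0")
         (simp_all add: translation_mult_op_translation[OF _ \<psi>] mult_op_apply power2_eq_square)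
  qed
  then have "conj_average u S (mult_op \<psi>) \<xi> e = (\<Sum>s\<in>S. of_real ((u s (coset_point e))\<^sup>2) * \<xi> e)"
    unfolding conj_average_apply[OF bounded_op_mult_op[OF \<psi>] \<xi>] by (rule sum.cong[OF refl])
  also have "\<dots> = of_real (\<Sum>s\<in>S. (u s (coset_point e))\<^sup>2) * \<xi> e"
    by (simp only: of_real_sum sum_distrib_right)
  finally show "conj_average u S (mult_op \<psi>) \<xi> e = \<xi> e"
    using unit[of "coset_point e"] by simp
qed

lemma id_op_minus_conj_average:
  fixes u :: "'g \<Rightarrow> 'x \<Rightarrow> real"
  assumes S: "finite S" and unit: "\<And>y. (\<Sum>s\<in>S. (u s y)\<^sup>2) = 1"
    and plateau: "\<And>s y. s \<in> S \<Longrightarrow> u s y \<noteq> 0 \<Longrightarrow> \<psi> (act s y) = 1"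
    and j: "bounded_op Q j" and \<psi>: "\<And>y. cmod (\<psi> y) \<le> 1" and \<xi>: "\<xi> \<in> l2 Q"
  shows "op_diff (id_op Q) (conj_average u S j) \<xi> =
    (\<lambda>e. - conj_average u S (op_diff j (mult_op \<psi>)) \<xi> e)"
proof
  fix e
  have P: "bounded_op Q (mult_op \<psi>)" by (rule bounded_op_mult_op[OF \<psi>])
  have "op_diff (id_op Q) (conj_average u S j) \<xi> e =
      conj_average u S (mult_op \<psi>) \<xi> e - conj_average u S j \<xi> e"
    using \<xi> by (simp add: op_diff_def id_op_def conj_average_mult_op[where u = u and \<psi> = \<psi>, OF S unit plateau \<psi> \<xi>])
  also have "\<dots> = - conj_average u S (op_diff j (mult_op \<psi>)) \<xi> e"
  proof -
    have "translation (- s) (op_diff j (mult_op \<psi>) \<eta>) =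
        (\<lambda>c. translation (- s) (j \<eta>) c - translation (- s) (mult_op \<psi> \<eta>) c)" for s \<eta>
      unfolding op_diff_def
      by (rule bounded_op_diff[OF bounded_op_translation bounded_op_apply_l2[OF j] bounded_op_apply_l2[OF P]])
    then show ?thesis
      unfolding conj_average_apply[OF j \<xi>] conj_average_apply[OF P \<xi>]
        conj_average_apply[OF bounded_op_op_diff[OF j P] \<xi>]
      by (simp add: right_diff_distrib sum_subtractf)
  qed
  finally show "op_diff (id_op Q) (conj_average u S j) \<xi> e = - conj_average u S (op_diff j (mult_op \<psi>)) \<xi> e" .
qed

lemma opnorm_id_op_minus_conj_average_le:
  fixes u :: "'g \<Rightarrow> 'x \<Rightarrow> real"
  assumes S: "finite S" and unit: "\<And>y. (\<Sum>s\<in>S. (u s y)\<^sup>2) = 1"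
    and plateau: "\<And>s y. s \<in> S \<Longrightarrow> u s y \<noteq> 0 \<Longrightarrow> \<psi> (act s y) = 1"
    and j: "bounded_op Q j" and \<psi>: "\<And>y. cmod (\<psi> y) \<le> 1"
  shows "opnorm Q (op_diff (id_op Q) (conj_average u S j)) \<le> opnorm Q (op_diff j (mult_op \<psi>))"
proof (rule opnorm_leI)
  have E: "bounded_op Q (op_diff j (mult_op \<psi>))"
    by (rule bounded_op_op_diff[OF j bounded_op_mult_op[OF \<psi>]])
  then show "0 \<le> opnorm Q (op_diff j (mult_op \<psi>))" by (rule opnorm_nonneg)
  fix \<xi> assume \<xi>: "\<xi> \<in> l2 Q"
  have "l2norm Q (op_diff (id_op Q) (conj_average u S j) \<xi>) =
      l2norm Q (conj_average u S (op_diff j (mult_op \<psi>)) \<xi>)"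
    by (subst id_op_minus_conj_average[where u = u and \<psi> = \<psi>, OF S unit plateau j \<psi> \<xi>])
       (simp_all add: l2norm_uminus)
  also have "\<dots> = l2norm Q (\<lambda>e. \<Sum>s\<in>S. of_real (u s (coset_point e)) *
      (translation (- s) \<circ> op_diff j (mult_op \<psi>) \<circ> translation s) (\<lambda>d. of_real (u s (coset_point d)) * \<xi> d) e)"
    by (rule arg_cong[where f = "l2norm Q"]) (simp add: fun_eq_iff conj_average_apply[OF E \<xi>])
  also have "\<dots> \<le> opnorm Q (op_diff j (mult_op \<psi>)) * l2norm Q \<xi>"
    using S \<xi> opnorm_nonneg[OF E] unit
    by (intro l2norm_weighted_sum_le)
       (auto simp: bounded_op_l2[OF bounded_op_translation] bounded_op_apply_l2[OF E]
         intro: l2norm_conjugate_translation_le[OF E])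
  finally show "l2norm Q (op_diff (id_op Q) (conj_average u S j) \<xi>) \<le>
      opnorm Q (op_diff j (mult_op \<psi>)) * l2norm Q \<xi>" .
qed

lemma closed_ideal_near_id_op:
  assumes minimal: "minimal_action act" and cpt: "compact (UNIV :: 'x set)"
    and J: "closed_ideal Q (crossed_alg act x) J" and j: "j \<in> J"
    and \<psi>: "\<And>y. cmod (\<psi> y) \<le> 1" and V: "open V" "V \<noteq> {}" "\<And>y. y \<in> V \<Longrightarrow> \<psi> y = 1"
  obtains j' where "j' \<in> J" "opnorm Q (op_diff (id_op Q) j') \<le> opnorm Q (op_diff j (mult_op \<psi>))"
proof -
  obtain \<rho> :: "'x \<Rightarrow> real" and V' where \<rho>: "continuous_on UNIV \<rho>" "\<And>y. y \<notin> V \<Longrightarrow> \<rho> y = 0"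
    and V': "open V'" "V' \<noteq> {}" "\<And>y. y \<in> V' \<Longrightarrow> \<rho> y = 1"
    by (rule plateau_function[OF cpt V(1,2)]) auto
  obtain S where S: "finite S" "\<And>y. \<exists>s\<in>S. act s y \<in> V'"
    by (rule finite_translates_cover[OF minimal cpt V'(1,2)]) auto
  have "continuous_on UNIV (\<lambda>y. \<rho> (act s y))" for s
    by (rule continuous_on_compose2[OF \<rho>(1) continuous_on_act]) auto
  moreover have "\<exists>s\<in>S. \<rho> (act s y) \<noteq> 0" for y
    using S(2)[of y] V'(3) by force
  ultimately obtain u :: "'g \<Rightarrow> 'x \<Rightarrow> real" where u: "\<And>s. continuous_on UNIV (u s)"
    "\<And>y. (\<Sum>s\<in>S. (u s y)\<^sup>2) = 1" "\<And>s y. u s y \<noteq> 0 \<Longrightarrow> \<rho> (act s y) \<noteq> 0"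
    using square_partition_of_unity[OF S(1), of "\<lambda>s y. \<rho> (act s y)"] by blast
  have "\<bar>u s y\<bar> \<le> 1" if "s \<in> S" for s y
    using abs_le_one_if_sum_squares_le_one[OF S(1) that, of "\<lambda>s. u s y"] u(2)[of y] by simp
  then have "conj_average u S j \<in> J"
    by (rule conj_average_in_closed_ideal[OF J j S(1) u(1)])
  moreover have "opnorm Q (op_diff (id_op Q) (conj_average u S j)) \<le> opnorm Q (op_diff j (mult_op \<psi>))"
  proof (rule opnorm_id_op_minus_conj_average_le[where u = u, OF S(1) u(2) _ _ \<psi>])
    show "\<psi> (act s y) = 1" if "u s y \<noteq> 0" for s y
      using u(3)[OF that] \<rho>(2) V(3) by blast
    show "bounded_op Q j"
      using j J crossed_alg_bounded unfolding closed_ideal_def by blast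
  qed
  ultimately show ?thesis using that by blast
qed

lemma closed_ideal_eq_crossed_alg:
  assumes minimal: "minimal_action act" and cpt: "compact (UNIV :: 'x set)" and x: "x \<in> X00 act"
    and J: "closed_ideal Q (crossed_alg act x) J" and nz: "J \<noteq> {zero_op}"
  shows "J = crossed_alg act x"
proof -
  obtain j \<psi> V where j: "j \<in> J" "\<And>y. cmod (\<psi> y) \<le> 1" "open V" "V \<noteq> {}" "\<And>y. y \<in> V \<Longrightarrow> \<psi> y = 1"
    and near: "opnorm Q (op_diff j (mult_op \<psi>)) \<le> 1/2"
    by (rule closed_ideal_near_mult_op[OF x cpt J nz]) auto
  obtain j' where "j' \<in> J" "opnorm Q (op_diff (id_op Q) j') \<le> opnorm Q (op_diff j (mult_op \<psi>))"
    by (rule closed_ideal_near_id_op[OF minimal cpt J j]) auto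
  then show ?thesis
    using near by (intro closed_ideal_eq_if_near_id_op[OF J crossed_alg_bounded id_op_in_crossed_alg]) auto
qed

lemma crossed_alg_nontrivial: "crossed_alg act x \<noteq> {zero_op}"
proof -
  have "id_op Q (delta H) = delta H"
    using delta_in_l2[OF H_in_Q] by (simp add: id_op_def)
  then have "id_op Q (delta H) H = 1"
    by (simp add: delta_def)
  then have "id_op Q \<noteq> zero_op" by (auto simp: zero_op_def)
  then show ?thesis using id_op_in_crossed_alg by blast
qed

end

theorem mainTheorem17:
  fixes act :: "'g::group_add \<Rightarrow> 'x::t2_space \<Rightarrow> 'x" and x :: 'x
  assumes "gamma_boundary act"
    and "x \<in> X00 act"
  shows "simple_cstar (cosets (Gamma0 act x)) (crossed_alg act x)"
proof -
  have "group_action act" "minimal_action act" "compact (UNIV :: 'x set)"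
    using assms(1) unfolding gamma_boundary_def by auto
  then interpret pointed_action act x
    by unfold_locales
  show ?thesis
    unfolding simple_cstar_def
    using crossed_alg_nontrivial closed_ideal_eq_crossed_alg[OF \<open>minimal_action act\<close>
        \<open>compact (UNIV :: 'x set)\<close> assms(2)]
    by blast
qed

end
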